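(* Consider a region discretized by the FDTD-Q scheme described in the context, with $0<\Delta t<\Delta t_{\mathrm{CFL,gen}}=2/\rho\!\left(\frac{1}{\hbar}(D_V'')^{-1/2}H(D_V'')^{-1/2}\right)$ ($\rho$ the spectral radius), and assume that the total probability is bounded above by a finite value $\mathcal{P}_{\max}$: $\mathcal{P}^n\le\mathcal{P}_{\max}$ for $n=0,1,\dots,n_t$. Then $$\mathcal{H}^n\ge\Delta x\Delta y\Delta z\,\frac{\mathcal{P}_{\max}}{\lambda_{\min}(\mathbf{P})}\left(\min\Big(\min_{i,j,k}U_{i,j,k},\,0\Big)-\frac{4\hbar}{\Delta t}\right),\qquad n=1,2,\dots,n_t-1,$$ where $\lambda_{\min}$ denotes the smallest eigenvalue, and $$\frac{\mathcal{H}^{n+1}-\mathcal{H}^n}{\Delta t}=s^{n+\frac12},\qquad n=1,2,\dots,n_t-2.$$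
   Context: Fix constants $\hbar>0$, $m>0$, cell sizes $\Delta x,\Delta y,\Delta z>0$, positive integers $n_x,n_y,n_z,n_t$ and a time step $\Delta t>0$. The region is a box made of $n_x\times n_y\times n_z$ primary cells of size $\Delta x\times\Delta y\times\Delta z$, with primary nodes $(i,j,k)$, $1\le i\le n_x+1$, $1\le j\le n_y+1$, $1\le k\le n_z+1$. Let $N=(n_x+1)(n_y+1)(n_z+1)$; vectors indexed by nodes use the ordering $i+(j-1)(n_x+1)+(k-1)(n_x+1)(n_y+1)$. Real potential values $U_{i,j,k}$ are given at the nodes; $D_U$ is the $N\times N$ diagonal matrix containing them. Let $I_p$ be the $p\times p$ identity, $\tilde I_p=\mathrm{diag}(\tfrac12,1,\dots,1,\tfrac12)$ ($p\times p$), $W_p=[0_{p\times1}\ I_p]-[I_p\ 0_{p\times 1}]$ ($p\times(p+1)$), $\otimes$ the Kronecker product, and $e\{p,q\}$ the $q\times 1$ vector with $1$ in position $p$ and zeros elsewhere. Define $D_V''=\Delta x\Delta y\Delta z\,\tilde I_{n_z+1}\otimes\tilde I_{n_y+1}\otimes\tilde I_{n_x+1}$; $D=[D_x\ D_y\ D_z]$ with $D_x=-I_{n_z+1}\otimes I_{n_y+1}\otimes W_{n_x}^T$, $D_y=-I_{n_z+1}\otimes W_{n_y}^T\otimes I_{n_x+1}$, $D_z=-W_{n_z}^T\otimes I_{n_y+1}\otimes I_{n_x+1}$; $D_S''=\mathrm{diag}(\Delta y\Delta z\,\tilde I_{n_z+1}\otimes\tilde I_{n_y+1}\otimes I_{n_x},\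 \Delta x\Delta z\,\tilde I_{n_z+1}\otimes I_{n_y}\otimes\tilde I_{n_x+1},\ \Delta x\Delta y\,I_{n_z}\otimes\tilde I_{n_y+1}\otimes\tilde I_{n_x+1})$; $D_l'=\mathrm{diag}(\Delta x\, I_{n_x(n_y+1)(n_z+1)},\ \Delta y\, I_{(n_x+1)n_y(n_z+1)},\ \Delta z\, I_{(n_x+1)(n_y+1)n_z})$; $H=\frac{\hbar^2}{2m}D D_S''(D_l')^{-1}D^T+D_V''D_U$; $\mathbf{P}=\begin{bmatrix}D_V''&-\frac{\Delta t}{2\hbar}H\\-\frac{\Delta t}{2\hbar}H&D_V''\end{bmatrix}$. Boundary ("hanging") variables: $L=[L_W\ L_E\ L_S\ L_N\ L_B\ L_T]$ with $L_W=I_{n_z+1}\otimes I_{n_y+1}\otimes e\{1,n_x+1\}$, $L_E=I_{n_z+1}\otimes I_{n_y+1}\otimes e\{n_x+1,n_x+1\}$, $L_S=I_{n_z+1}\otimes e\{1,n_y+1\}\otimes I_{n_x+1}$, $L_N=I_{n_z+1}\otimes e\{n_y+1,n_y+1\}\otimes I_{n_x+1}$, $L_B=e\{1,n_z+1\}\otimes I_{n_y+1}\otimes I_{n_x+1}$, $L_T=e\{n_z+1,n_z+1\}\otimes I_{n_y+1}\otimes I_{n_x+1}$; let $M$ be the number of columns of $L$. $D_{\hat n}=\mathrm{diag}(-I_{(n_y+1)(n_z+1)},I_{(n_y+1)(n_z+1)},-I_{(n_x+1)(n_z+1)},I_{(n_x+1)(n_z+1)},-I_{(n_x+1)(n_y+1)},I_{(n_x+1)(n_y+1)})$;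 $D_{S,b}''=\mathrm{diag}(\Delta y\Delta z\,\tilde I_{n_z+1}\otimes\tilde I_{n_y+1},\ \Delta y\Delta z\,\tilde I_{n_z+1}\otimes\tilde I_{n_y+1},\ \Delta x\Delta z\,\tilde I_{n_z+1}\otimes\tilde I_{n_x+1},\ \Delta x\Delta z\,\tilde I_{n_z+1}\otimes\tilde I_{n_x+1},\ \Delta x\Delta y\,\tilde I_{n_y+1}\otimes\tilde I_{n_x+1},\ \Delta x\Delta y\,\tilde I_{n_y+1}\otimes\tilde I_{n_x+1})$; $H_\perp=\frac{\hbar^2}{2m}L D_{\hat n}D_{S,b}''$. FDTD-Q scheme: real vectors $\psi_R^n\in\mathbb{R}^N$ and $\psi_I^{n-\frac12}\in\mathbb{R}^N$ ($n=0,\dots,n_t$), and arbitrary boundary vectors $g_R^n\in\mathbb{R}^M$, $g_I^{n+\frac12}\in\mathbb{R}^M$ ($n=0,\dots,n_t-1$), satisfying for $n=0,\dots,n_t-1$: $\hbar D_V''\frac{\psi_R^{n+1}-\psi_R^n}{\Delta t}=H\psi_I^{n+\frac12}-H_\perp g_I^{n+\frac12}$ and $\hbar D_V''\frac{\psi_I^{n+\frac12}-\psi_I^{n-\frac12}}{\Delta t}=-H\psi_R^n+H_\perp g_R^n$. Let $\psi^n=\begin{bmatrix}\psi_R^n\\ \psi_I^{n-\frac12}\end{bmatrix}$. Total probability: $\mathcal{P}^n=(\psi^n)^T\mathbf{P}\psi^n$, $n=0,\dots,n_t$. Total energy, for $n=1,\dots,n_t-1$: $\mathcal{H}^n=(\psi_R^n)^TH\psi_R^n+(\psi_I^{n-\frac12})^TH\psi_I^{n-\frac12}+\Delta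 t\left(\frac{\psi_R^n-\psi_R^{n-1}}{\Delta t}\right)^T(\hbar D_V'')\frac{\psi_I^{n+\frac12}-\psi_I^{n-\frac12}}{\Delta t}$. Supplied power, for $n=1,\dots,n_t-2$: $s^{n+\frac12}=2\left(\frac{\psi_R^{n+1}-\psi_R^n}{\Delta t}\right)^TH_\perp\frac{g_R^{n+1}+g_R^n}{2}+2\left(\frac{\psi_I^{n+\frac12}-\psi_I^{n-\frac12}}{\Delta t}\right)^TH_\perp\frac{g_I^{n+\frac12}+g_I^{n-\frac12}}{2}$. *)

theory Defs
  imports "Jordan_Normal_Form.Spectral_Radius"
begin

definition kron :: "real mat \<Rightarrow> real mat \<Rightarrow> real mat" where
  "kron A B = mat (dim_row A * dim_row B) (dim_col A * dim_col B)
     (\<lambda>(i,j). A $$ (i div dim_row B, j div dim_col B) * B $$ (i mod dim_row B, j mod dim_col B))"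

definition hcat :: "real mat \<Rightarrow> real mat \<Rightarrow> real mat" where
  "hcat A B = mat (dim_row A) (dim_col A + dim_col B)
     (\<lambda>(i,j). if j < dim_col A then A $$ (i,j) else B $$ (i, j - dim_col A))"

definition bdiag :: "real mat \<Rightarrow> real mat \<Rightarrow> real mat" where
  "bdiag A B = mat (dim_row A + dim_row B) (dim_col A + dim_col B)
     (\<lambda>(i,j). if i < dim_row A \<and> j < dim_col A then A $$ (i,j)
             else if dim_row A \<le> i \<and> dim_col A \<le> j then B $$ (i - dim_row A, j - dim_col A)
             else 0)"

definition Itil :: "nat \<Rightarrow> real mat" where
  "Itil p = mat p p (\<lambda>(i,j). if i = j then (if i = 0 \<or> i = p - 1 then 1/2 else 1) else 0)"

text \<open>\<open>W_p = [0 I_p] - [I_p 0]\<close>, a p x (p+1) matrix\<close>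
definition Wm :: "nat \<Rightarrow> real mat" where
  "Wm p = mat p (p+1) (\<lambda>(i,j). (if j = i + 1 then 1 else 0) - (if j = i then 1 else 0))"

text \<open>\<open>e{p,q}\<close>: q x 1 column with 1 in (1-based) position p\<close>
definition evec :: "nat \<Rightarrow> nat \<Rightarrow> real mat" where
  "evec p q = mat q 1 (\<lambda>(i,j). if i = p - 1 then 1 else 0)"

definition Im :: "nat \<Rightarrow> real mat" where "Im p = 1\<^sub>m p"

definition diag_inv_sqrt :: "real mat \<Rightarrow> real mat" where
  "diag_inv_sqrt D = mat (dim_row D) (dim_col D) (\<lambda>(i,j). if i = j then 1 / sqrt (D $$ (i,i)) else 0)"

definition lambda_min :: "real mat \<Rightarrow> real" where
  "lambda_min A = Min {l. eigenvalue A l}"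

definition Nn :: "nat \<Rightarrow> nat \<Rightarrow> nat \<Rightarrow> nat" where
  "Nn nx ny nz = (nx+1)*(ny+1)*(nz+1)"

definition DV :: "real \<Rightarrow> real \<Rightarrow> real \<Rightarrow> nat \<Rightarrow> nat \<Rightarrow> nat \<Rightarrow> real mat" where
  "DV dx dy dz nx ny nz = (dx*dy*dz) \<cdot>\<^sub>m kron (Itil (nz+1)) (kron (Itil (ny+1)) (Itil (nx+1)))"

text \<open>\<open>D_U\<close>: diagonal with \<open>U_{i,j,k}\<close> (1-based node indices) at position
  \<open>i+(j-1)(nx+1)+(k-1)(nx+1)(ny+1)\<close> (1-based)\<close>
definition DU :: "(nat \<Rightarrow> nat \<Rightarrow> nat \<Rightarrow> real) \<Rightarrow> nat \<Rightarrow> nat \<Rightarrow> nat \<Rightarrow> real mat" where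
  "DU U nx ny nz = mat (Nn nx ny nz) (Nn nx ny nz) (\<lambda>(a,b). if a = b then
      U (a mod (nx+1) + 1) (a div (nx+1) mod (ny+1) + 1) (a div ((nx+1)*(ny+1)) + 1) else 0)"

definition Dx :: "nat \<Rightarrow> nat \<Rightarrow> nat \<Rightarrow> real mat" where
  "Dx nx ny nz = - kron (Im (nz+1)) (kron (Im (ny+1)) (transpose_mat (Wm nx)))"
definition Dy :: "nat \<Rightarrow> nat \<Rightarrow> nat \<Rightarrow> real mat" where
  "Dy nx ny nz = - kron (Im (nz+1)) (kron (transpose_mat (Wm ny)) (Im (nx+1)))"
definition Dz :: "nat \<Rightarrow> nat \<Rightarrow> nat \<Rightarrow> real mat" where
  "Dz nx ny nz = - kron (transpose_mat (Wm nz)) (kron (Im (ny+1)) (Im (nx+1)))"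

definition Dmat :: "nat \<Rightarrow> nat \<Rightarrow> nat \<Rightarrow> real mat" where
  "Dmat nx ny nz = hcat (Dx nx ny nz) (hcat (Dy nx ny nz) (Dz nx ny nz))"

definition DS :: "real \<Rightarrow> real \<Rightarrow> real \<Rightarrow> nat \<Rightarrow> nat \<Rightarrow> nat \<Rightarrow> real mat" where
  "DS dx dy dz nx ny nz = bdiag ((dy*dz) \<cdot>\<^sub>m kron (Itil (nz+1)) (kron (Itil (ny+1)) (Im nx)))
     (bdiag ((dx*dz) \<cdot>\<^sub>m kron (Itil (nz+1)) (kron (Im ny) (Itil (nx+1))))
            ((dx*dy) \<cdot>\<^sub>m kron (Im nz) (kron (Itil (ny+1)) (Itil (nx+1)))))"

definition Dl :: "real \<Rightarrow> real \<Rightarrow> real \<Rightarrow> nat \<Rightarrow> nat \<Rightarrow> nat \<Rightarrow> real mat" where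
  "Dl dx dy dz nx ny nz = bdiag (dx \<cdot>\<^sub>m Im (nx*(ny+1)*(nz+1)))
     (bdiag (dy \<cdot>\<^sub>m Im ((nx+1)*ny*(nz+1))) (dz \<cdot>\<^sub>m Im ((nx+1)*(ny+1)*nz)))"

definition Dl_inv :: "real \<Rightarrow> real \<Rightarrow> real \<Rightarrow> nat \<Rightarrow> nat \<Rightarrow> nat \<Rightarrow> real mat" where
  "Dl_inv dx dy dz nx ny nz = bdiag ((1/dx) \<cdot>\<^sub>m Im (nx*(ny+1)*(nz+1)))
     (bdiag ((1/dy) \<cdot>\<^sub>m Im ((nx+1)*ny*(nz+1))) ((1/dz) \<cdot>\<^sub>m Im ((nx+1)*(ny+1)*nz)))"

definition Hmat :: "real \<Rightarrow> real \<Rightarrow> real \<Rightarrow> real \<Rightarrow> real \<Rightarrow> nat \<Rightarrow> nat \<Rightarrow> nat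
                    \<Rightarrow> (nat \<Rightarrow> nat \<Rightarrow> nat \<Rightarrow> real) \<Rightarrow> real mat" where
  "Hmat hbar m dx dy dz nx ny nz U =
     (hbar^2 / (2*m)) \<cdot>\<^sub>m (Dmat nx ny nz * DS dx dy dz nx ny nz * Dl_inv dx dy dz nx ny nz
                            * transpose_mat (Dmat nx ny nz))
     + DV dx dy dz nx ny nz * DU U nx ny nz"

definition Pmat :: "real \<Rightarrow> real \<Rightarrow> real \<Rightarrow> real \<Rightarrow> real \<Rightarrow> real \<Rightarrow> nat \<Rightarrow> nat \<Rightarrow> nat
                    \<Rightarrow> (nat \<Rightarrow> nat \<Rightarrow> nat \<Rightarrow> real) \<Rightarrow> real mat" where
  "Pmat hbar m dt dx dy dz nx ny nz U =
     (let V = DV dx dy dz nx ny nz; K = (- dt / (2*hbar)) \<cdot>\<^sub>m Hmat hbar m dx dy dz nx ny nz U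
      in four_block_mat V K K V)"

definition dt_CFL :: "real \<Rightarrow> real \<Rightarrow> real \<Rightarrow> real \<Rightarrow> real \<Rightarrow> nat \<Rightarrow> nat \<Rightarrow> nat
                    \<Rightarrow> (nat \<Rightarrow> nat \<Rightarrow> nat \<Rightarrow> real) \<Rightarrow> real" where
  "dt_CFL hbar m dx dy dz nx ny nz U =
     (let S = diag_inv_sqrt (DV dx dy dz nx ny nz)
      in 2 / spectral_radius (map_mat complex_of_real
                ((1/hbar) \<cdot>\<^sub>m (S * Hmat hbar m dx dy dz nx ny nz U * S))))"

definition Lmat :: "nat \<Rightarrow> nat \<Rightarrow> nat \<Rightarrow> real mat" where
  "Lmat nx ny nz =
     hcat (kron (Im (nz+1)) (kron (Im (ny+1)) (evec 1 (nx+1))))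
    (hcat (kron (Im (nz+1)) (kron (Im (ny+1)) (evec (nx+1) (nx+1))))
    (hcat (kron (Im (nz+1)) (kron (evec 1 (ny+1)) (Im (nx+1))))
    (hcat (kron (Im (nz+1)) (kron (evec (ny+1) (ny+1)) (Im (nx+1))))
    (hcat (kron (evec 1 (nz+1)) (kron (Im (ny+1)) (Im (nx+1))))
          (kron (evec (nz+1) (nz+1)) (kron (Im (ny+1)) (Im (nx+1))))))))"

definition Mm :: "nat \<Rightarrow> nat \<Rightarrow> nat \<Rightarrow> nat" where
  "Mm nx ny nz = dim_col (Lmat nx ny nz)"

definition Dnhat :: "nat \<Rightarrow> nat \<Rightarrow> nat \<Rightarrow> real mat" where
  "Dnhat nx ny nz =
     bdiag (- Im ((ny+1)*(nz+1))) (bdiag (Im ((ny+1)*(nz+1)))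
    (bdiag (- Im ((nx+1)*(nz+1))) (bdiag (Im ((nx+1)*(nz+1)))
    (bdiag (- Im ((nx+1)*(ny+1))) (Im ((nx+1)*(ny+1)))))))"

definition DSb :: "real \<Rightarrow> real \<Rightarrow> real \<Rightarrow> nat \<Rightarrow> nat \<Rightarrow> nat \<Rightarrow> real mat" where
  "DSb dx dy dz nx ny nz =
     bdiag ((dy*dz) \<cdot>\<^sub>m kron (Itil (nz+1)) (Itil (ny+1)))
    (bdiag ((dy*dz) \<cdot>\<^sub>m kron (Itil (nz+1)) (Itil (ny+1)))
    (bdiag ((dx*dz) \<cdot>\<^sub>m kron (Itil (nz+1)) (Itil (nx+1)))
    (bdiag ((dx*dz) \<cdot>\<^sub>m kron (Itil (nz+1)) (Itil (nx+1)))
    (bdiag ((dx*dy) \<cdot>\<^sub>m kron (Itil (ny+1)) (Itil (nx+1)))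
           ((dx*dy) \<cdot>\<^sub>m kron (Itil (ny+1)) (Itil (nx+1)))))))"

definition Hperp :: "real \<Rightarrow> real \<Rightarrow> real \<Rightarrow> real \<Rightarrow> real \<Rightarrow> nat \<Rightarrow> nat \<Rightarrow> nat \<Rightarrow> real mat" where
  "Hperp hbar m dx dy dz nx ny nz =
     (hbar^2 / (2*m)) \<cdot>\<^sub>m (Lmat nx ny nz * Dnhat nx ny nz * DSb dx dy dz nx ny nz)"

text \<open>\<open>psiR n = \<psi>_R^n\<close>, \<open>psiI n = \<psi>_I^{n-1/2}\<close>, \<open>gR n = g_R^n\<close>, \<open>gI n = g_I^{n+1/2}\<close>.\<close>
definition fdtdq_scheme where
  "fdtdq_scheme hbar m dt dx dy dz nx ny nz nt U psiR psiI gR gI \<longleftrightarrow>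
     (let N = Nn nx ny nz; M = Mm nx ny nz; H = Hmat hbar m dx dy dz nx ny nz U;
          V = DV dx dy dz nx ny nz; Hp = Hperp hbar m dx dy dz nx ny nz in
      (\<forall>n\<le>nt. psiR n \<in> carrier_vec N \<and> psiI n \<in> carrier_vec N) \<and>
      (\<forall>n<nt. gR n \<in> carrier_vec M \<and> gI n \<in> carrier_vec M) \<and>
      (\<forall>n<nt.
         hbar \<cdot>\<^sub>m V *\<^sub>v ((1/dt) \<cdot>\<^sub>v (psiR (Suc n) - psiR n)) = H *\<^sub>v psiI (Suc n) - Hp *\<^sub>v gI n \<and>
         hbar \<cdot>\<^sub>m V *\<^sub>v ((1/dt) \<cdot>\<^sub>v (psiI (Suc n) - psiI n)) = - (H *\<^sub>v psiR n) + Hp *\<^sub>v gR n))"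

definition total_prob where
  "total_prob hbar m dt dx dy dz nx ny nz U psiR psiI n =
     (let psi = psiR n @\<^sub>v psiI n in psi \<bullet> (Pmat hbar m dt dx dy dz nx ny nz U *\<^sub>v psi))"

definition total_energy where
  "total_energy hbar m dt dx dy dz nx ny nz U psiR psiI n =
     (let H = Hmat hbar m dx dy dz nx ny nz U in
      psiR n \<bullet> (H *\<^sub>v psiR n) + psiI n \<bullet> (H *\<^sub>v psiI n)
      + dt * (((1/dt) \<cdot>\<^sub>v (psiR n - psiR (n-1))) \<bullet>
              ((hbar \<cdot>\<^sub>m DV dx dy dz nx ny nz) *\<^sub>v ((1/dt) \<cdot>\<^sub>v (psiI (Suc n) - psiI n)))))"

text \<open>\<open>supplied_power ... n = s^{n+1/2}\<close>\<close>
definition supplied_power where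
  "supplied_power hbar m dt dx dy dz nx ny nz psiR psiI gR gI n =
     (let Hp = Hperp hbar m dx dy dz nx ny nz in
      2 * (((1/dt) \<cdot>\<^sub>v (psiR (Suc n) - psiR n)) \<bullet> (Hp *\<^sub>v ((1/2) \<cdot>\<^sub>v (gR (Suc n) + gR n))))
    + 2 * (((1/dt) \<cdot>\<^sub>v (psiI (Suc n) - psiI n)) \<bullet> (Hp *\<^sub>v ((1/2) \<cdot>\<^sub>v (gI n + gI (n-1))))))"

end

theory Submission
  imports Defs "HOL-Analysis.Function_Topology"
begin

text \<open>
  The energy balance is pure algebra: pairing the update of \<open>\<psi>\<^sub>R\<close> with the increment of
  \<open>\<psi>\<^sub>I\<close> and vice versa, the symmetry of \<open>H\<close> and of \<open>D\<^sub>V''\<close> makes every interior term telescope,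
  and only the boundary terms, i.e. \<open>\<Delta>t s\<^sup>n\<^sup>+\<^sup>1\<^sup>/\<^sup>2\<close>, survive.

  For the lower bound, \<open>H = (\<hbar>\<^sup>2/2m) D D\<^sub>S'' (D\<^sub>l')\<^sup>-\<^sup>1 D\<^sup>T + D\<^sub>V'' D\<^sub>U\<close> is bounded below by
  \<open>\<Delta>x\<Delta>y\<Delta>z min(min U, 0)\<close>: the first term is a congruence of a nonnegative diagonal matrix and
  the diagonal of \<open>D\<^sub>V''\<close> lies in \<open>[\<Delta>x\<Delta>y\<Delta>z/8, \<Delta>x\<Delta>y\<Delta>z]\<close>. Below the CFL limit the off-diagonal
  blocks of \<open>P\<close> are dominated by its diagonal blocks, so \<open>P\<close> is positive definite; by the
  Rayleigh bound for \<open>\<lambda>\<^sub>m\<^sub>i\<^sub>n(P)\<close> the probability bound controls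
  \<open>|\<psi>\<^sub>R\<^sup>n|\<^sup>2 + |\<psi>\<^sub>I\<^sup>n\<^sup>-\<^sup>1\<^sup>/\<^sup>2|\<^sup>2 \<le> P\<^sub>m\<^sub>a\<^sub>x / \<lambda>\<^sub>m\<^sub>i\<^sub>n(P)\<close>, and the cross term of the energy is bounded by
  \<open>2|ab| \<le> a\<^sup>2 + b\<^sup>2\<close>, which produces the term \<open>- 4\<hbar>/\<Delta>t\<close>.
\<close>

lemma smult_mat_mult_vec:
  "dim_vec x = dim_col A \<Longrightarrow> ((c :: real) \<cdot>\<^sub>m A) *\<^sub>v x = c \<cdot>\<^sub>v (A *\<^sub>v x)"
  by (intro eq_vecI) (auto simp: scalar_prod_def sum_distrib_left mult.assoc)

lemma transpose_smult_mat: "transpose_mat ((c :: real) \<cdot>\<^sub>m A) = c \<cdot>\<^sub>m transpose_mat A"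
  by (intro eq_matI) auto

lemma mult_mat_vec_smult_add:
  "dim_vec x = dim_vec y \<Longrightarrow> (A :: real mat) *\<^sub>v (c \<cdot>\<^sub>v (x + y)) = c \<cdot>\<^sub>v (A *\<^sub>v x + A *\<^sub>v y)"
  by (intro eq_vecI) (auto simp: scalar_prod_def sum.distrib algebra_simps sum_distrib_left)

lemma mult_mat_vec_carrier_row: "dim_row A = n \<Longrightarrow> A *\<^sub>v x \<in> carrier_vec n"
  by (rule carrier_vecI) simp

section \<open>Quadratic forms of real symmetric matrices\<close>

lemma scalar_prod_self_eq_sum_sq:
  "(x :: real vec) \<in> carrier_vec n \<Longrightarrow> x \<bullet> x = (\<Sum>i<n. (x $ i)\<^sup>2)"
  by (auto simp: scalar_prod_def lessThan_atLeast0 power2_eq_square)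

lemma scalar_prod_self_nonneg: "0 \<le> (x :: real vec) \<bullet> x"
  by (simp add: scalar_prod_def sum_nonneg)

lemma scalar_prod_self_pos:
  assumes "(x :: real vec) \<in> carrier_vec n" and "x \<noteq> 0\<^sub>v n"
  shows "0 < x \<bullet> x"
proof -
  obtain i where i: "i < n" "x $ i \<noteq> 0" using assms by (metis eq_vecI carrier_vecD index_zero_vec)
  have "0 < (x $ i)\<^sup>2" using i by simp
  also have "\<dots> \<le> (\<Sum>j<n. (x $ j)\<^sup>2)" using i by (intro member_le_sum) auto
  finally show ?thesis using scalar_prod_self_eq_sum_sq[OF assms(1)] by simp
qed

lemma symmetric_scalar_prod_swap:
  assumes A: "(A :: real mat) \<in> carrier_mat n n" and sym: "transpose_mat A = A"
    and x: "x \<in> carrier_vec n" and y: "y \<in> carrier_vec n"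
  shows "x \<bullet> (A *\<^sub>v y) = y \<bullet> (A *\<^sub>v x)"
proof -
  have "y \<bullet> (A *\<^sub>v x) = (transpose_mat A *\<^sub>v y) \<bullet> x"
    by (rule transpose_vec_mult_scalar[OF A x y, symmetric])
  also have "\<dots> = x \<bullet> (A *\<^sub>v y)" using sym A x y by (simp add: comm_scalar_prod[of _ n])
  finally show ?thesis by simp
qed

lemma symmetric_quadratic_form_add:
  assumes A: "(A :: real mat) \<in> carrier_mat n n" and sym: "transpose_mat A = A"
    and x: "x \<in> carrier_vec n" and y: "y \<in> carrier_vec n"
  shows "(x + t \<cdot>\<^sub>v y) \<bullet> (A *\<^sub>v (x + t \<cdot>\<^sub>v y))
      = x \<bullet> (A *\<^sub>v x) + 2 * t * (y \<bullet> (A *\<^sub>v x)) + t\<^sup>2 * (y \<bullet> (A *\<^sub>v y))"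
  using A x y symmetric_scalar_prod_swap[OF A sym x y]
  by (simp add: mult_add_distrib_mat_vec[OF A] mult_mat_vec[OF A] add_scalar_prod_distrib[of _ n]
      scalar_prod_add_distrib[of _ n] power2_eq_square algebra_simps)

lemma symmetric_quadratic_form_diff:
  assumes A: "(A :: real mat) \<in> carrier_mat n n" and sym: "transpose_mat A = A"
    and x: "x \<in> carrier_vec n" and y: "y \<in> carrier_vec n"
  shows "(x - y) \<bullet> (A *\<^sub>v x) + (x - y) \<bullet> (A *\<^sub>v y) = x \<bullet> (A *\<^sub>v x) - y \<bullet> (A *\<^sub>v y)"
  using A x y symmetric_scalar_prod_swap[OF A sym x y] by (simp add: minus_scalar_prod_distrib[of _ n])

lemma quadratic_form_smult_add:
  fixes A B :: "real mat"
  assumes A: "A \<in> carrier_mat n n" and B: "B \<in> carrier_mat n n" and x: "x \<in> carrier_vec n"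
  shows "x \<bullet> ((c \<cdot>\<^sub>m A + B) *\<^sub>v x) = c * (x \<bullet> (A *\<^sub>v x)) + x \<bullet> (B *\<^sub>v x)"
proof -
  have "(c \<cdot>\<^sub>m A + B) *\<^sub>v x = c \<cdot>\<^sub>v (A *\<^sub>v x) + B *\<^sub>v x"
    using A B x by (simp add: add_mult_distrib_mat_vec[of _ n n] smult_mat_mult_vec)
  moreover have "A *\<^sub>v x \<in> carrier_vec n" "B *\<^sub>v x \<in> carrier_vec n" using A B x by auto
  ultimately show ?thesis using x by (simp add: scalar_prod_add_distrib[of _ n])
qed

lemma quadratic_form_four_block_mat:
  fixes V K :: "real mat"
  assumes V: "V \<in> carrier_mat n n" and K: "K \<in> carrier_mat n n" and sym: "transpose_mat K = K"
    and u: "u \<in> carrier_vec n" and w: "w \<in> carrier_vec n"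
  shows "(u @\<^sub>v w) \<bullet> (four_block_mat V K K V *\<^sub>v (u @\<^sub>v w))
      = u \<bullet> (V *\<^sub>v u) + w \<bullet> (V *\<^sub>v w) + 2 * (u \<bullet> (K *\<^sub>v w))"
proof -
  have "(u @\<^sub>v w) \<bullet> (four_block_mat V K K V *\<^sub>v (u @\<^sub>v w))
      = u \<bullet> (V *\<^sub>v u + K *\<^sub>v w) + w \<bullet> (K *\<^sub>v u + V *\<^sub>v w)"
    unfolding four_block_mat_mult_vec[OF V K K V u w]
    by (rule scalar_prod_append[OF u w]) (use V K u w in auto)
  also have "\<dots> = u \<bullet> (V *\<^sub>v u) + w \<bullet> (V *\<^sub>v w) + (u \<bullet> (K *\<^sub>v w) + w \<bullet> (K *\<^sub>v u))"
    using V K u w by (simp add: scalar_prod_add_distrib[of _ n])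
  finally show ?thesis using symmetric_scalar_prod_swap[OF K sym w u] by simp
qed

lemma scalar_prod_abs_le_weighted:
  fixes x y :: "real vec"
  assumes x: "x \<in> carrier_vec n" and y: "y \<in> carrier_vec n" and r: "0 < r"
  shows "2 * \<bar>x \<bullet> y\<bar> \<le> r * (x \<bullet> x) + (y \<bullet> y) / r"
proof -
  have "2 * \<bar>x $ i * y $ i\<bar> \<le> r * (x $ i)\<^sup>2 + (y $ i)\<^sup>2 / r" for i
  proof -
    have "0 \<le> (r * \<bar>x $ i\<bar> - \<bar>y $ i\<bar>)\<^sup>2" by simp
    hence "(2 * \<bar>x $ i * y $ i\<bar>) * r \<le> (r * (x $ i)\<^sup>2 + (y $ i)\<^sup>2 / r) * r"
      using r by (simp add: power2_eq_square algebra_simps abs_mult)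
    thus ?thesis using r by simp
  qed
  hence "(\<Sum>i<n. 2 * \<bar>x $ i * y $ i\<bar>) \<le> (\<Sum>i<n. r * (x $ i)\<^sup>2 + (y $ i)\<^sup>2 / r)"
    by (rule sum_mono)
  moreover have "2 * \<bar>\<Sum>i<n. x $ i * y $ i\<bar> \<le> (\<Sum>i<n. 2 * \<bar>x $ i * y $ i\<bar>)"
    using sum_abs[of "\<lambda>i. x $ i * y $ i" "{..<n}"] by (simp add: sum_distrib_left[symmetric])
  ultimately have "2 * \<bar>\<Sum>i<n. x $ i * y $ i\<bar> \<le> (\<Sum>i<n. r * (x $ i)\<^sup>2 + (y $ i)\<^sup>2 / r)"
    by linarith
  moreover have "x \<bullet> y = (\<Sum>i<n. x $ i * y $ i)"
    using y by (simp add: scalar_prod_def lessThan_atLeast0)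
  ultimately show ?thesis
    unfolding scalar_prod_self_eq_sum_sq[OF x] scalar_prod_self_eq_sum_sq[OF y]
    by (simp add: sum.distrib sum_distrib_left sum_divide_distrib)
qed

lemma scalar_prod_self_diff_le:
  fixes x y :: "real vec"
  assumes x: "x \<in> carrier_vec n" and y: "y \<in> carrier_vec n"
  shows "(x - y) \<bullet> (x - y) \<le> 2 * (x \<bullet> x + y \<bullet> y)"
proof -
  have "(x $ i - y $ i)\<^sup>2 \<le> 2 * ((x $ i)\<^sup>2 + (y $ i)\<^sup>2)" for i
    using zero_le_power2[of "x $ i + y $ i"] by (simp add: power2_eq_square algebra_simps)
  hence "(\<Sum>i<n. (x $ i - y $ i)\<^sup>2) \<le> (\<Sum>i<n. 2 * ((x $ i)\<^sup>2 + (y $ i)\<^sup>2))"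
    by (rule sum_mono)
  thus ?thesis using x y
    by (simp add: scalar_prod_self_eq_sum_sq[of _ n] sum.distrib sum_distrib_left)
qed

lemma scalar_prod_self_eq_0:
  assumes "(x :: real vec) \<in> carrier_vec n" and "x \<bullet> x = 0"
  shows "x = 0\<^sub>v n"
  using scalar_prod_self_pos[OF assms(1)] assms(2) by fastforce

lemma linear_coeff_zero_if_quadratic_nonneg:
  fixes a c :: real
  assumes nonneg: "\<And>t. 0 \<le> 2 * t * a + t\<^sup>2 * c" and "0 \<le> c"
  shows "a = 0"
proof (rule ccontr)
  assume "a \<noteq> 0"
  define t where "t = - a / (c + 1)"
  have tc: "t * (c + 1) = - a" using \<open>0 \<le> c\<close> by (simp add: t_def)
  have "(c + 1)\<^sup>2 * (2 * t * a + t\<^sup>2 * c) = 2 * a * (t * (c + 1)) * (c + 1) + (t * (c + 1))\<^sup>2 * c"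
    by (simp add: algebra_simps power2_eq_square)
  also have "\<dots> = - (a\<^sup>2 * (c + 2))" unfolding tc by (simp add: algebra_simps power2_eq_square)
  also have "\<dots> < 0" using \<open>a \<noteq> 0\<close> \<open>0 \<le> c\<close> by simp
  finally have "(c + 1)\<^sup>2 * (2 * t * a + t\<^sup>2 * c) < 0" .
  moreover have "0 \<le> (c + 1)\<^sup>2 * (2 * t * a + t\<^sup>2 * c)" using nonneg[of t] by simp
  ultimately show False by linarith
qed

lemma psd_quadratic_form_zero_imp_kernel:
  assumes A: "(A :: real mat) \<in> carrier_mat n n" and sym: "transpose_mat A = A"
    and psd: "\<And>x. x \<in> carrier_vec n \<Longrightarrow> 0 \<le> x \<bullet> (A *\<^sub>v x)"
    and v: "v \<in> carrier_vec n" and zero: "v \<bullet> (A *\<^sub>v v) = 0"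
  shows "A *\<^sub>v v = 0\<^sub>v n"
proof -
  define w where "w = A *\<^sub>v v"
  have w: "w \<in> carrier_vec n" using A v by (simp add: w_def)
  have "0 \<le> 2 * t * (w \<bullet> w) + t\<^sup>2 * (w \<bullet> (A *\<^sub>v w))" for t
    using psd[of "v + t \<cdot>\<^sub>v w"] symmetric_quadratic_form_add[OF A sym v w] v w zero
    by (simp add: w_def)
  hence "w \<bullet> w = 0" using psd[OF w] by (rule linear_coeff_zero_if_quadratic_nonneg)
  thus ?thesis using scalar_prod_self_eq_0[OF w] by (simp add: w_def)
qed

text \<open>Vectors of length \<open>n\<close> are encoded as functions \<open>nat \<Rightarrow> real\<close> vanishing from \<open>n\<close> on, so
  that compactness of the unit sphere comes from the product topology.\<close>
definition quad_form_coords :: "real mat \<Rightarrow> nat \<Rightarrow> (nat \<Rightarrow> real) \<Rightarrow> real" where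
  "quad_form_coords A n f = (\<Sum>i<n. \<Sum>j<n. f i * A $$ (i,j) * f j)"

definition unit_sphere_coords :: "nat \<Rightarrow> (nat \<Rightarrow> real) set" where
  "unit_sphere_coords n =
     Pi UNIV (\<lambda>i. if i < n then {-1..1} else {0}) \<inter> {f. (\<Sum>i<n. (f i)\<^sup>2) = 1}"

lemma compact_unit_sphere_coords: "compact (unit_sphere_coords n)"
proof -
  have "compact (Pi\<^sub>E UNIV (\<lambda>i::nat. if i < n then {-1..1::real} else {0}))"
    using compactin_PiE[of "\<lambda>_. euclidean" UNIV "\<lambda>i::nat. if i < n then {-1..1::real} else {0}"]
    by (simp add: euclidean_product_topology compactin_euclidean_iff)
  moreover have "closed {f::nat\<Rightarrow>real. (\<Sum>i<n. (f i)\<^sup>2) = 1}"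
    by (intro closed_Collect_eq continuous_intros continuous_on_product_coordinates)
  ultimately show ?thesis unfolding unit_sphere_coords_def
    by (simp add: PiE_UNIV_domain compact_Int_closed)
qed

lemma continuous_on_quad_form_coords: "continuous_on UNIV (quad_form_coords A n)"
  unfolding quad_form_coords_def by (intro continuous_intros continuous_on_product_coordinates)

lemma scalar_prod_quad_form_coords:
  assumes "x \<in> carrier_vec n" "A \<in> carrier_mat n n"
  shows "x \<bullet> (A *\<^sub>v x) = quad_form_coords A n (\<lambda>i. x $ i)"
  using assms by (simp add: quad_form_coords_def scalar_prod_def mult_mat_vec_def row_def
      lessThan_atLeast0 sum_distrib_left mult.assoc mult.commute mult.left_commute)

lemma normalized_mem_unit_sphere_coords:
  assumes x: "x \<in> carrier_vec n" and "x \<noteq> 0\<^sub>v n"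
  shows "(\<lambda>i. if i < n then x $ i / sqrt (x \<bullet> x) else 0) \<in> unit_sphere_coords n"
proof -
  let ?c = "sqrt (x \<bullet> x)"
  have s: "0 < x \<bullet> x" using scalar_prod_self_pos[OF assms] .
  hence c: "0 < ?c" "?c\<^sup>2 = x \<bullet> x" by auto
  have "- ?c \<le> x $ i \<and> x $ i \<le> ?c" if "i < n" for i
  proof -
    have "(x $ i)\<^sup>2 \<le> (\<Sum>j<n. (x $ j)\<^sup>2)" using that by (intro member_le_sum) auto
    hence "(x $ i)\<^sup>2 \<le> ?c\<^sup>2" using c scalar_prod_self_eq_sum_sq[OF x] by simp
    hence "\<bar>x $ i\<bar> \<le> ?c" using c by (metis power2_abs power2_le_imp_le less_imp_le)
    thus ?thesis by linarith
  qed
  hence "(\<lambda>i. if i < n then x $ i / ?c else 0) \<in> Pi UNIV (\<lambda>i. if i < n then {-1..1} else {0})"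
    using c by (auto simp: divide_le_eq le_divide_eq)
  moreover have "(\<Sum>i<n. (if i < n then x $ i / ?c else 0)\<^sup>2) = 1"
    using c s scalar_prod_self_eq_sum_sq[OF x]
    by (simp add: power_divide sum_divide_distrib[symmetric])
  ultimately show ?thesis by (simp add: unit_sphere_coords_def)
qed

lemma quadratic_form_min_on_sphere:
  fixes A :: "real mat"
  assumes A: "A \<in> carrier_mat n n" and n: "0 < n"
  shows "\<exists>v \<in> carrier_vec n. v \<bullet> v = 1 \<and>
           (\<forall>x \<in> carrier_vec n. (v \<bullet> (A *\<^sub>v v)) * (x \<bullet> x) \<le> x \<bullet> (A *\<^sub>v x))"
proof -
  have "(if b then 1 else 0 :: real)\<^sup>2 = (if b then 1 else 0)" for b by simp
  hence "(\<lambda>i. if i = 0 then 1 else 0) \<in> unit_sphere_coords n"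
    using n by (auto simp: unit_sphere_coords_def sum.delta)
  then obtain f0 where f0: "f0 \<in> unit_sphere_coords n"
    and min: "\<And>f. f \<in> unit_sphere_coords n \<Longrightarrow> quad_form_coords A n f0 \<le> quad_form_coords A n f"
    using continuous_attains_inf[OF compact_unit_sphere_coords _
        continuous_on_subset[OF continuous_on_quad_form_coords subset_UNIV]] by blast
  define v where "v = vec n f0"
  have v: "v \<in> carrier_vec n" by (simp add: v_def)
  have vAv: "v \<bullet> (A *\<^sub>v v) = quad_form_coords A n f0"
    using scalar_prod_quad_form_coords[OF v A] by (simp add: v_def quad_form_coords_def)
  have "(v \<bullet> (A *\<^sub>v v)) * (x \<bullet> x) \<le> x \<bullet> (A *\<^sub>v x)" if x: "x \<in> carrier_vec n" for x
  proof (cases "x = 0\<^sub>v n")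
    case True thus ?thesis using A by simp
  next
    case False
    define s where "s = x \<bullet> x"
    have s: "0 < s" using scalar_prod_self_pos[OF x False] by (simp add: s_def)
    define c where "c = sqrt s"
    have c: "0 < c" "c\<^sup>2 = s" using s by (auto simp: c_def)
    define f where "f = (\<lambda>i. if i < n then x $ i / c else 0)"
    have "f \<in> unit_sphere_coords n"
      unfolding f_def c_def s_def by (rule normalized_mem_unit_sphere_coords[OF x False])
    hence "v \<bullet> (A *\<^sub>v v) \<le> quad_form_coords A n (\<lambda>i. x $ i) / s"
      using min[of f] c vAv
      by (simp add: quad_form_coords_def f_def sum_divide_distrib power2_eq_square)
    thus ?thesis using s scalar_prod_quad_form_coords[OF x A] by (simp add: s_def le_divide_eq)
  qed
  moreover have "v \<bullet> v = 1"
    using f0 unfolding scalar_prod_self_eq_sum_sq[OF v] by (simp add: v_def unit_sphere_coords_def)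
  ultimately show ?thesis using v by blast
qed

lemma symmetric_mat_min_eigenvalue:
  fixes A :: "real mat"
  assumes A: "A \<in> carrier_mat n n" and n: "0 < n" and sym: "transpose_mat A = A"
  shows "\<exists>l. eigenvalue A l \<and> (\<forall>x \<in> carrier_vec n. l * (x \<bullet> x) \<le> x \<bullet> (A *\<^sub>v x))"
proof -
  obtain v where v: "v \<in> carrier_vec n" "v \<bullet> v = 1"
    and min: "\<And>x. x \<in> carrier_vec n \<Longrightarrow> (v \<bullet> (A *\<^sub>v v)) * (x \<bullet> x) \<le> x \<bullet> (A *\<^sub>v x)"
    using quadratic_form_min_on_sphere[OF A n] by blast
  define l where "l = v \<bullet> (A *\<^sub>v v)"
  define B where "B = A - l \<cdot>\<^sub>m 1\<^sub>m n"
  have B: "B \<in> carrier_mat n n" using A by (simp add: B_def minus_carrier_mat)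
  have Bx: "B *\<^sub>v x = A *\<^sub>v x - l \<cdot>\<^sub>v x" if "x \<in> carrier_vec n" for x
    using A that by (simp add: B_def minus_mult_distrib_mat_vec[of _ n n] smult_mat_mult_vec)
  have xBx: "x \<bullet> (B *\<^sub>v x) = x \<bullet> (A *\<^sub>v x) - l * (x \<bullet> x)" if x: "x \<in> carrier_vec n" for x
    using A x by (simp add: Bx[OF x] scalar_prod_minus_distrib[of _ n])
  have "transpose_mat B = B"
    using A sym by (simp add: B_def transpose_minus[of _ n n] transpose_smult_mat)
  hence "B *\<^sub>v v = 0\<^sub>v n"
    by (rule psd_quadratic_form_zero_imp_kernel[OF B _ _ v(1)])
      (use xBx min v in \<open>simp_all add: l_def\<close>)
  hence Av: "A *\<^sub>v v - l \<cdot>\<^sub>v v = 0\<^sub>v n" using Bx[OF v(1)] by simp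
  have "A *\<^sub>v v = l \<cdot>\<^sub>v v"
  proof (rule eq_vecI)
    fix i assume "i < dim_vec (l \<cdot>\<^sub>v v)"
    hence "i < n" using v by simp
    moreover from this have "(A *\<^sub>v v - l \<cdot>\<^sub>v v) $ i = 0" using Av by simp
    ultimately show "(A *\<^sub>v v) $ i = (l \<cdot>\<^sub>v v) $ i" using A v by simp
  qed (use A v in simp)
  moreover have "v \<noteq> 0\<^sub>v n" using v by auto
  ultimately have "eigenvalue A l" using A v by (auto simp: eigenvalue_def eigenvector_def)
  thus ?thesis using min l_def by blast
qed

lemma eigenvalue_from_square:
  fixes K :: "real mat"
  assumes K: "K \<in> carrier_mat n n" and v: "v \<in> carrier_vec n" "v \<noteq> 0\<^sub>v n"
    and KKv: "K *\<^sub>v (K *\<^sub>v v) = \<mu> \<cdot>\<^sub>v v" and "0 \<le> \<mu>"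
  shows "\<exists>e. eigenvalue K e \<and> e\<^sup>2 = \<mu>"
proof -
  define s where "s = sqrt \<mu>"
  have s: "s\<^sup>2 = \<mu>" using \<open>0 \<le> \<mu>\<close> by (simp add: s_def)
  define w where "w = K *\<^sub>v v + s \<cdot>\<^sub>v v"
  have w: "w \<in> carrier_vec n" using K v by (simp add: w_def)
  \<comment> \<open>\<open>(K - s)(K + s) v = 0\<close>: either \<open>w = (K + s) v\<close> is an eigenvector for \<open>s\<close>, or \<open>v\<close> is one for \<open>-s\<close>\<close>
  show ?thesis
  proof (cases "w = 0\<^sub>v n")
    case False
    have "K *\<^sub>v w = s \<cdot>\<^sub>v w"
    proof (rule eq_vecI)
      fix i assume "i < dim_vec (s \<cdot>\<^sub>v w)"
      hence i: "i < n" using w by simp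
      have "K *\<^sub>v w = K *\<^sub>v (K *\<^sub>v v) + s \<cdot>\<^sub>v (K *\<^sub>v v)"
        unfolding w_def using K v by (simp add: mult_add_distrib_mat_vec[OF K] mult_mat_vec[OF K])
      thus "(K *\<^sub>v w) $ i = (s \<cdot>\<^sub>v w) $ i"
        using i K v s by (simp add: KKv w_def power2_eq_square algebra_simps)
    qed (use K w in simp)
    thus ?thesis using False w K s by (auto simp: eigenvalue_def eigenvector_def)
  next
    case True
    have "K *\<^sub>v v = (- s) \<cdot>\<^sub>v v"
    proof (rule eq_vecI)
      fix i assume "i < dim_vec ((- s) \<cdot>\<^sub>v v)"
      hence i: "i < n" using v by simp
      have "w $ i = 0" using True i by simp
      thus "(K *\<^sub>v v) $ i = ((- s) \<cdot>\<^sub>v v) $ i" using i K v by (simp add: w_def)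
    qed (use K v in simp)
    thus ?thesis using v K s by (auto simp: eigenvalue_def eigenvector_def)
  qed
qed

lemma symmetric_mat_norm_bound:
  fixes K :: "real mat"
  assumes K: "K \<in> carrier_mat n n" and n: "0 < n" and sym: "transpose_mat K = K"
  shows "\<exists>e. eigenvalue K e \<and> (\<forall>x \<in> carrier_vec n. (K *\<^sub>v x) \<bullet> (K *\<^sub>v x) \<le> e\<^sup>2 * (x \<bullet> x))"
proof -
  define C where "C = - (K * K)"
  have C: "C \<in> carrier_mat n n" using K by (simp add: C_def)
  have "transpose_mat C = C"
    unfolding C_def transpose_uminus using transpose_mult[OF K K] sym by simp
  then obtain l where "eigenvalue C l"
    and min: "\<And>x. x \<in> carrier_vec n \<Longrightarrow> l * (x \<bullet> x) \<le> x \<bullet> (C *\<^sub>v x)"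
    using symmetric_mat_min_eigenvalue[OF C n] by blast
  then obtain v where v: "v \<in> carrier_vec n" "v \<noteq> 0\<^sub>v n" and Cv: "C *\<^sub>v v = l \<cdot>\<^sub>v v"
    using C by (auto simp: eigenvalue_def eigenvector_def)
  have CK: "C *\<^sub>v x = - (K *\<^sub>v (K *\<^sub>v x))" if "x \<in> carrier_vec n" for x
    using K that by (simp add: C_def)
  have xCx: "x \<bullet> (C *\<^sub>v x) = - ((K *\<^sub>v x) \<bullet> (K *\<^sub>v x))" if x: "x \<in> carrier_vec n" for x
    using CK[OF x] K x symmetric_scalar_prod_swap[OF K sym x, of "K *\<^sub>v x"] by simp
  have "l * (v \<bullet> v) \<le> 0"
    using xCx[OF v(1)] Cv v scalar_prod_self_nonneg[of "K *\<^sub>v v"] by simp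
  hence "0 \<le> - l" using scalar_prod_self_pos[OF v] by (simp add: mult_le_0_iff)
  moreover have "K *\<^sub>v (K *\<^sub>v v) = (- l) \<cdot>\<^sub>v v"
  proof (rule eq_vecI)
    fix i assume "i < dim_vec ((- l) \<cdot>\<^sub>v v)"
    hence i: "i < n" using v by simp
    have "(l \<cdot>\<^sub>v v) $ i = (- (K *\<^sub>v (K *\<^sub>v v))) $ i" using Cv CK[OF v(1)] by simp
    thus "(K *\<^sub>v (K *\<^sub>v v)) $ i = ((- l) \<cdot>\<^sub>v v) $ i" using i K v by simp
  qed (use K v in simp)
  ultimately obtain e where "eigenvalue K e" "e\<^sup>2 = - l"
    using eigenvalue_from_square[OF K v] by blast
  moreover have "(K *\<^sub>v x) \<bullet> (K *\<^sub>v x) \<le> - l * (x \<bullet> x)" if "x \<in> carrier_vec n" for x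
    using min[OF that] xCx[OF that] by simp
  ultimately show ?thesis by auto
qed

lemma eigenvalue_abs_le_spectral_radius:
  fixes K :: "real mat"
  assumes K: "K \<in> carrier_mat n n" and n: "0 < n" and e: "eigenvalue K e"
  shows "\<bar>e\<bar> \<le> spectral_radius (map_mat complex_of_real K)"
proof -
  have "eigenvalue (map_mat complex_of_real K) (complex_of_real e)"
    by (rule of_real_hom.eigenvalue_hom[OF K e])
  hence "norm (complex_of_real e) \<in> norm ` spectrum (map_mat complex_of_real K)"
    unfolding spectrum_def by (intro image_eqI[of _ _ "complex_of_real e"]) auto
  from spectral_radius_mem_max(2)[OF _ n this] K show ?thesis by simp
qed

lemma symmetric_mat_norm_le_spectral_radius:
  fixes K :: "real mat"
  assumes K: "K \<in> carrier_mat n n" and n: "0 < n" and sym: "transpose_mat K = K"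
    and x: "x \<in> carrier_vec n"
  shows "(K *\<^sub>v x) \<bullet> (K *\<^sub>v x) \<le> (spectral_radius (map_mat complex_of_real K))\<^sup>2 * (x \<bullet> x)"
proof -
  obtain e where e: "eigenvalue K e"
    and bound: "(K *\<^sub>v x) \<bullet> (K *\<^sub>v x) \<le> e\<^sup>2 * (x \<bullet> x)"
    using symmetric_mat_norm_bound[OF K n sym] x by blast
  have "e\<^sup>2 \<le> (spectral_radius (map_mat complex_of_real K))\<^sup>2"
    using eigenvalue_abs_le_spectral_radius[OF K n e] by (metis abs_ge_zero power2_abs power_mono)
  with bound show ?thesis using scalar_prod_self_nonneg[of x] by (meson mult_right_mono order_trans)
qed

lemma lambda_min_symmetric_mat:
  fixes A :: "real mat"
  assumes A: "A \<in> carrier_mat n n" and n: "0 < n" and sym: "transpose_mat A = A"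
  shows "eigenvalue A (lambda_min A)"
    and "x \<in> carrier_vec n \<Longrightarrow> lambda_min A * (x \<bullet> x) \<le> x \<bullet> (A *\<^sub>v x)"
proof -
  obtain l where l: "eigenvalue A l"
    and min: "\<And>x. x \<in> carrier_vec n \<Longrightarrow> l * (x \<bullet> x) \<le> x \<bullet> (A *\<^sub>v x)"
    using symmetric_mat_min_eigenvalue[OF A n sym] by blast
  have "l \<le> l'" if l': "eigenvalue A l'" for l'
  proof -
    obtain u where u: "u \<in> carrier_vec n" "u \<noteq> 0\<^sub>v n" "A *\<^sub>v u = l' \<cdot>\<^sub>v u"
      using l' A by (auto simp: eigenvalue_def eigenvector_def)
    have "l * (u \<bullet> u) \<le> l' * (u \<bullet> u)" using min[OF u(1)] u by simp
    thus ?thesis using scalar_prod_self_pos[OF u(1,2)] by simp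
  qed
  moreover have "finite {l. eigenvalue A l}"
    using card_finite_spectrum(1)[OF A] by (simp add: spectrum_def)
  ultimately have "lambda_min A = l" unfolding lambda_min_def using l by (intro Min_eqI) auto
  thus "eigenvalue A (lambda_min A)" "x \<in> carrier_vec n \<Longrightarrow> lambda_min A * (x \<bullet> x) \<le> x \<bullet> (A *\<^sub>v x)"
    using l min by auto
qed

lemma lambda_min_ge:
  fixes A :: "real mat"
  assumes A: "A \<in> carrier_mat n n" and n: "0 < n" and sym: "transpose_mat A = A"
    and bound: "\<And>x. x \<in> carrier_vec n \<Longrightarrow> c * (x \<bullet> x) \<le> x \<bullet> (A *\<^sub>v x)"
  shows "c \<le> lambda_min A"
proof -
  obtain v where v: "v \<in> carrier_vec n" "v \<noteq> 0\<^sub>v n" "A *\<^sub>v v = lambda_min A \<cdot>\<^sub>v v"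
    using lambda_min_symmetric_mat(1)[OF A n sym] A by (auto simp: eigenvalue_def eigenvector_def)
  have "c * (v \<bullet> v) \<le> lambda_min A * (v \<bullet> v)" using bound[OF v(1)] v by simp
  thus ?thesis using scalar_prod_self_pos[OF v(1,2)] by simp
qed

section \<open>Diagonal matrices\<close>

lemma mat_diag_mult_vec:
  "x \<in> carrier_vec n \<Longrightarrow> mat_diag n f *\<^sub>v x = vec n (\<lambda>i. f i * x $ i)"
  by (intro eq_vecI)
    (auto simp: mat_diag_def scalar_prod_def row_def if_distrib[of "\<lambda>a. a * _"] sum.delta cong: if_cong)

lemma scalar_prod_mat_diag:
  fixes f :: "nat \<Rightarrow> real"
  assumes "x \<in> carrier_vec n" and "y \<in> carrier_vec n"
  shows "x \<bullet> (mat_diag n f *\<^sub>v y) = (\<Sum>i<n. f i * x $ i * y $ i)"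
  using assms by (simp add: mat_diag_mult_vec scalar_prod_def lessThan_atLeast0 ac_simps)

lemma transpose_mat_diag[simp]: "transpose_mat (mat_diag n f) = mat_diag n f"
  by (intro eq_matI) (auto simp: mat_diag_def)

lemma smult_mat_diag: "(c :: real) \<cdot>\<^sub>m mat_diag n f = mat_diag n (\<lambda>i. c * f i)"
  by (intro eq_matI) (auto simp: mat_diag_def)

lemma kron_mat_diag:
  "kron (mat_diag a f) (mat_diag b g) = mat_diag (a * b) (\<lambda>i. f (i div b) * g (i mod b))"
proof (rule eq_matI)
  fix i j assume "i < dim_row (mat_diag (a * b) (\<lambda>i. f (i div b) * g (i mod b)))"
    and "j < dim_col (mat_diag (a * b) (\<lambda>i. f (i div b) * g (i mod b)))"
  hence ij: "i < a * b" "j < a * b" by (auto simp: mat_diag_def)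
  hence "0 < b" by (cases b) auto
  hence "i div b < a" "j div b < a" "i mod b < b" "j mod b < b"
    using ij by (auto simp: less_mult_imp_div_less)
  moreover have "i div b = j div b \<and> i mod b = j mod b \<longleftrightarrow> i = j" by (metis div_mult_mod_eq)
  ultimately show "kron (mat_diag a f) (mat_diag b g) $$ (i, j)
      = mat_diag (a * b) (\<lambda>i. f (i div b) * g (i mod b)) $$ (i, j)"
    using ij by (auto simp: kron_def mat_diag_def)
qed (auto simp: kron_def mat_diag_def)

lemma bdiag_mat_diag:
  "bdiag (mat_diag a f) (mat_diag b g) = mat_diag (a + b) (\<lambda>i. if i < a then f i else g (i - a))"
  by (intro eq_matI) (auto simp: bdiag_def mat_diag_def)

lemma Im_eq_mat_diag: "Im n = mat_diag n (\<lambda>_. 1)"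
  by (simp add: Im_def)

definition Itil_entry :: "nat \<Rightarrow> nat \<Rightarrow> real" where
  "Itil_entry p i = (if i = 0 \<or> i = p - 1 then 1/2 else 1)"

lemma Itil_eq_mat_diag: "Itil p = mat_diag p (Itil_entry p)"
  by (intro eq_matI) (auto simp: Itil_def mat_diag_def Itil_entry_def)

lemma Itil_entry_bounds: "1/2 \<le> Itil_entry p i" "Itil_entry p i \<le> 1"
  by (auto simp: Itil_entry_def)

lemma diag_inv_sqrt_mat_diag:
  "diag_inv_sqrt (mat_diag n f) = mat_diag n (\<lambda>i. 1 / sqrt (f i))"
  by (intro eq_matI) (auto simp: diag_inv_sqrt_def mat_diag_def)

lemma mat_diag_quadratic_form_lower_bound:
  fixes f :: "nat \<Rightarrow> real"
  assumes "x \<in> carrier_vec n" and "\<And>i. i < n \<Longrightarrow> a \<le> f i"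
  shows "a * (x \<bullet> x) \<le> x \<bullet> (mat_diag n f *\<^sub>v x)"
proof -
  have "a * (x \<bullet> x) = (\<Sum>i<n. a * x $ i * x $ i)"
    by (simp add: scalar_prod_self_eq_sum_sq[OF assms(1)] sum_distrib_left power2_eq_square mult.assoc)
  also have "\<dots> \<le> (\<Sum>i<n. f i * x $ i * x $ i)"
    using assms(2) by (intro sum_mono) (simp add: mult.assoc mult_right_mono)
  finally show ?thesis by (simp add: scalar_prod_mat_diag[OF assms(1,1)])
qed

definition nonneg_diag_mat :: "nat \<Rightarrow> real mat \<Rightarrow> bool" where
  "nonneg_diag_mat n A \<longleftrightarrow> (\<exists>f. A = mat_diag n f \<and> (\<forall>i. 0 \<le> f i))"

lemma nonneg_diag_mat_carrier: "nonneg_diag_mat n A \<Longrightarrow> A \<in> carrier_mat n n"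
  unfolding nonneg_diag_mat_def by auto

lemma nonneg_diag_mat_kron:
  "nonneg_diag_mat a A \<Longrightarrow> nonneg_diag_mat b B \<Longrightarrow> nonneg_diag_mat (a * b) (kron A B)"
  unfolding nonneg_diag_mat_def by (auto simp: kron_mat_diag)

lemma nonneg_diag_mat_bdiag:
  "nonneg_diag_mat a A \<Longrightarrow> nonneg_diag_mat b B \<Longrightarrow> nonneg_diag_mat (a + b) (bdiag A B)"
  unfolding nonneg_diag_mat_def by (auto simp: bdiag_mat_diag)

lemma nonneg_diag_mat_smult: "nonneg_diag_mat n A \<Longrightarrow> 0 \<le> c \<Longrightarrow> nonneg_diag_mat n (c \<cdot>\<^sub>m A)"
  unfolding nonneg_diag_mat_def by (auto simp: smult_mat_diag)

lemma nonneg_diag_mat_mult: "nonneg_diag_mat n A \<Longrightarrow> nonneg_diag_mat n B \<Longrightarrow> nonneg_diag_mat n (A * B)"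
  unfolding nonneg_diag_mat_def by auto

lemma nonneg_diag_mat_Im: "nonneg_diag_mat n (Im n)"
  unfolding nonneg_diag_mat_def Im_eq_mat_diag by (intro exI[of _ "\<lambda>_. 1"]) simp

lemma nonneg_diag_mat_Itil: "nonneg_diag_mat n (Itil n)"
  unfolding nonneg_diag_mat_def Itil_eq_mat_diag by (auto simp: Itil_entry_def)

lemma nonneg_diag_mat_quadratic_form_nonneg:
  assumes "nonneg_diag_mat n A" and "x \<in> carrier_vec n"
  shows "0 \<le> x \<bullet> (A *\<^sub>v x)"
  using assms mat_diag_quadratic_form_lower_bound[of x n 0] by (auto simp: nonneg_diag_mat_def)

lemma congruence_nonneg_diag_mat:
  assumes D: "(D :: real mat) \<in> carrier_mat n k" and B: "nonneg_diag_mat k B"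
  shows "D * B * transpose_mat D \<in> carrier_mat n n"
    and "transpose_mat (D * B * transpose_mat D) = D * B * transpose_mat D"
    and "x \<in> carrier_vec n \<Longrightarrow> 0 \<le> x \<bullet> ((D * B * transpose_mat D) *\<^sub>v x)"
proof -
  obtain f where f: "B = mat_diag k f" "\<And>i. 0 \<le> f i" using B by (auto simp: nonneg_diag_mat_def)
  have Bc: "B \<in> carrier_mat k k" using f by simp
  show "D * B * transpose_mat D \<in> carrier_mat n n" using D Bc by simp
  have "transpose_mat (D * B * transpose_mat D)
      = transpose_mat (transpose_mat D) * transpose_mat (D * B)"
    by (rule transpose_mult) (use D Bc in auto)
  also have "transpose_mat (D * B) = transpose_mat B * transpose_mat D"
    by (rule transpose_mult) (use D Bc in auto)
  finally show "transpose_mat (D * B * transpose_mat D) = D * B * transpose_mat D"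
    using D Bc by (simp add: f assoc_mult_mat[of _ n k _ k _ n])
  assume x: "x \<in> carrier_vec n"
  have "(D * B * transpose_mat D) *\<^sub>v x = (D * B) *\<^sub>v (transpose_mat D *\<^sub>v x)"
    by (rule assoc_mult_mat_vec[of _ n k _ n]) (use D Bc x in auto)
  also have "\<dots> = D *\<^sub>v (B *\<^sub>v (transpose_mat D *\<^sub>v x))"
    by (rule assoc_mult_mat_vec[of _ n k _ k]) (use D Bc x in auto)
  finally have "x \<bullet> ((D * B * transpose_mat D) *\<^sub>v x) = (transpose_mat D *\<^sub>v x) \<bullet> (B *\<^sub>v (transpose_mat D *\<^sub>v x))"
    using transpose_vec_mult_scalar[OF D, of "B *\<^sub>v (transpose_mat D *\<^sub>v x)" x] D Bc x by simp
  also have "\<dots> \<ge> 0"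
    by (rule nonneg_diag_mat_quadratic_form_nonneg[OF B]) (use D x in simp)
  finally show "0 \<le> x \<bullet> ((D * B * transpose_mat D) *\<^sub>v x)" .
qed

lemma mat_diag_bilinear_abs_bound:
  fixes v :: "nat \<Rightarrow> real"
  assumes x: "x \<in> carrier_vec n" and y: "y \<in> carrier_vec n"
    and v: "\<And>i. 0 \<le> v i" "\<And>i. v i \<le> c"
  shows "2 * \<bar>x \<bullet> (mat_diag n v *\<^sub>v y)\<bar> \<le> c * (x \<bullet> x + y \<bullet> y)"
proof -
  have "2 * \<bar>v i * x $ i * y $ i\<bar> \<le> c * ((x $ i)\<^sup>2 + (y $ i)\<^sup>2)" for i
  proof -
    have "2 * \<bar>x $ i * y $ i\<bar> \<le> (x $ i)\<^sup>2 + (y $ i)\<^sup>2"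
      using sum_squares_bound[of "\<bar>x $ i\<bar>" "\<bar>y $ i\<bar>"] by (simp add: abs_mult)
    hence "v i * (2 * \<bar>x $ i * y $ i\<bar>) \<le> c * ((x $ i)\<^sup>2 + (y $ i)\<^sup>2)"
      using v[of i] by (intro mult_mono) auto
    thus ?thesis using v[of i] by (simp add: abs_mult mult.assoc)
  qed
  hence "(\<Sum>i<n. 2 * \<bar>v i * x $ i * y $ i\<bar>) \<le> (\<Sum>i<n. c * ((x $ i)\<^sup>2 + (y $ i)\<^sup>2))"
    by (rule sum_mono)
  moreover have "2 * \<bar>\<Sum>i<n. v i * x $ i * y $ i\<bar> \<le> (\<Sum>i<n. 2 * \<bar>v i * x $ i * y $ i\<bar>)"
    using sum_abs[of "\<lambda>i. v i * x $ i * y $ i" "{..<n}"] by (simp add: sum_distrib_left[symmetric])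
  ultimately have "2 * \<bar>\<Sum>i<n. v i * x $ i * y $ i\<bar> \<le> (\<Sum>i<n. c * ((x $ i)\<^sup>2 + (y $ i)\<^sup>2))"
    by linarith
  thus ?thesis
    by (simp add: scalar_prod_mat_diag[OF x y] scalar_prod_self_eq_sum_sq[OF x]
        scalar_prod_self_eq_sum_sq[OF y] sum.distrib sum_distrib_left distrib_left)
qed

section \<open>The FDTD-Q operators\<close>

lemma kron_carrier:
  "A \<in> carrier_mat a b \<Longrightarrow> B \<in> carrier_mat c d \<Longrightarrow> kron A B \<in> carrier_mat (a * c) (b * d)"
  by (auto simp: kron_def)

lemma hcat_carrier:
  "A \<in> carrier_mat r a \<Longrightarrow> B \<in> carrier_mat r b \<Longrightarrow> hcat A B \<in> carrier_mat r (a + b)"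
  by (auto simp: hcat_def)

definition num_edges :: "nat \<Rightarrow> nat \<Rightarrow> nat \<Rightarrow> nat" where
  "num_edges nx ny nz = nx*(ny+1)*(nz+1) + ((nx+1)*ny*(nz+1) + (nx+1)*(ny+1)*nz)"

lemma Dmat_carrier: "Dmat nx ny nz \<in> carrier_mat (Nn nx ny nz) (num_edges nx ny nz)"
proof -
  have W: "transpose_mat (Wm p) \<in> carrier_mat (p+1) p" for p by (simp add: Wm_def)
  have I: "Im p \<in> carrier_mat p p" for p by (simp add: Im_def)
  have "Dmat nx ny nz \<in> carrier_mat ((nz+1)*((ny+1)*(nx+1)))
      ((nz+1)*((ny+1)*nx) + ((nz+1)*(ny*(nx+1)) + nz*((ny+1)*(nx+1))))"
    unfolding Dmat_def Dx_def Dy_def Dz_def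
    by (intro hcat_carrier uminus_carrier_mat kron_carrier I W)
  thus ?thesis by (simp only: Nn_def num_edges_def ac_simps)
qed

lemma DS_nonneg_diag_mat:
  assumes "0 < dx" "0 < dy" "0 < dz"
  shows "nonneg_diag_mat (num_edges nx ny nz) (DS dx dy dz nx ny nz)"
proof -
  have "nonneg_diag_mat ((nz+1)*((ny+1)*nx) + ((nz+1)*(ny*(nx+1)) + nz*((ny+1)*(nx+1))))
      (DS dx dy dz nx ny nz)"
    unfolding DS_def using assms
    by (intro nonneg_diag_mat_bdiag nonneg_diag_mat_smult nonneg_diag_mat_kron
        nonneg_diag_mat_Im nonneg_diag_mat_Itil) auto
  thus ?thesis by (simp only: num_edges_def ac_simps)
qed

lemma Dl_inv_nonneg_diag_mat:
  assumes "0 < dx" "0 < dy" "0 < dz"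
  shows "nonneg_diag_mat (num_edges nx ny nz) (Dl_inv dx dy dz nx ny nz)"
  unfolding Dl_inv_def num_edges_def using assms
  by (intro nonneg_diag_mat_bdiag nonneg_diag_mat_smult nonneg_diag_mat_Im) auto

lemma DV_eq_mat_diag:
  assumes "0 < dx" "0 < dy" "0 < dz"
  obtains v where "DV dx dy dz nx ny nz = mat_diag (Nn nx ny nz) v"
    and "\<And>i. dx*dy*dz/8 \<le> v i" and "\<And>i. v i \<le> dx*dy*dz"
proof -
  define e where "e i = Itil_entry (nz+1) (i div ((ny+1)*(nx+1))) *
      (Itil_entry (ny+1) (i mod ((ny+1)*(nx+1)) div (nx+1)) *
       Itil_entry (nx+1) (i mod ((ny+1)*(nx+1)) mod (nx+1)))" for i
  have "DV dx dy dz nx ny nz = mat_diag ((nz+1)*((ny+1)*(nx+1))) (\<lambda>i. dx*dy*dz * e i)"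
    by (simp add: DV_def Itil_eq_mat_diag kron_mat_diag smult_mat_diag e_def)
  hence DV: "DV dx dy dz nx ny nz = mat_diag (Nn nx ny nz) (\<lambda>i. dx*dy*dz * e i)"
    by (simp only: Nn_def ac_simps)
  have "1/2 * (1/2 * (1/2)) \<le> e i" "e i \<le> 1 * (1 * 1)" for i
    unfolding e_def by (intro mult_mono Itil_entry_bounds mult_nonneg_nonneg order_trans[OF _ Itil_entry_bounds(1)]; simp)+
  hence "dx*dy*dz/8 \<le> dx*dy*dz * e i" "dx*dy*dz * e i \<le> dx*dy*dz" for i
    using assms by (simp_all add: mult_left_mono)
  with DV show ?thesis by (rule that)
qed

definition node_potential :: "(nat \<Rightarrow> nat \<Rightarrow> nat \<Rightarrow> real) \<Rightarrow> nat \<Rightarrow> nat \<Rightarrow> nat \<Rightarrow> nat \<Rightarrow> real"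
  where
  "node_potential U nx ny nz a =
     U (a mod (nx+1) + 1) (a div (nx+1) mod (ny+1) + 1) (a div ((nx+1)*(ny+1)) + 1)"

definition potential_floor :: "(nat \<Rightarrow> nat \<Rightarrow> nat \<Rightarrow> real) \<Rightarrow> nat \<Rightarrow> nat \<Rightarrow> nat \<Rightarrow> real" where
  "potential_floor U nx ny nz =
     min (Min {U i j k | i j k. i \<in> {1..nx+1} \<and> j \<in> {1..ny+1} \<and> k \<in> {1..nz+1}}) 0"

lemma DU_eq_mat_diag: "DU U nx ny nz = mat_diag (Nn nx ny nz) (node_potential U nx ny nz)"
  by (intro eq_matI) (auto simp: DU_def mat_diag_def node_potential_def)

lemma potential_floor_le_node_potential:
  assumes "a < Nn nx ny nz"
  shows "potential_floor U nx ny nz \<le> node_potential U nx ny nz a"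
proof -
  let ?S = "{U i j k | i j k. i \<in> {1..nx+1} \<and> j \<in> {1..ny+1} \<and> k \<in> {1..nz+1}}"
  have "?S = (\<lambda>(i,j,k). U i j k) ` ({1..nx+1} \<times> {1..ny+1} \<times> {1..nz+1})" by force
  hence fin: "finite ?S" by simp
  have "a < (nz+1)*((nx+1)*(ny+1))" using assms by (simp add: Nn_def ac_simps)
  hence "a div ((nx+1)*(ny+1)) < nz+1" by (rule less_mult_imp_div_less)
  hence "node_potential U nx ny nz a \<in> ?S" unfolding node_potential_def by fastforce
  thus ?thesis unfolding potential_floor_def using Min_le[OF fin] by fastforce
qed

lemma Hmat_split:
  assumes "0 < dx" "0 < dy" "0 < dz"
  obtains B v where "nonneg_diag_mat (num_edges nx ny nz) B"
    and "Hmat hbar m dx dy dz nx ny nz U =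
      (hbar\<^sup>2 / (2*m)) \<cdot>\<^sub>m (Dmat nx ny nz * B * transpose_mat (Dmat nx ny nz))
      + mat_diag (Nn nx ny nz) (\<lambda>i. v i * node_potential U nx ny nz i)"
    and "\<And>i. dx*dy*dz/8 \<le> v i" and "\<And>i. v i \<le> dx*dy*dz"
proof -
  let ?S = "DS dx dy dz nx ny nz" and ?L = "Dl_inv dx dy dz nx ny nz" and ?D = "Dmat nx ny nz"
  have S: "nonneg_diag_mat (num_edges nx ny nz) ?S" and L: "nonneg_diag_mat (num_edges nx ny nz) ?L"
    using DS_nonneg_diag_mat Dl_inv_nonneg_diag_mat assms by blast+
  hence assoc: "?D * ?S * ?L = ?D * (?S * ?L)"
    using assoc_mult_mat[OF Dmat_carrier nonneg_diag_mat_carrier nonneg_diag_mat_carrier] by blast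
  obtain v where DV: "DV dx dy dz nx ny nz = mat_diag (Nn nx ny nz) v"
    and "\<And>i. dx*dy*dz/8 \<le> v i" "\<And>i. v i \<le> dx*dy*dz"
    using DV_eq_mat_diag[OF assms] by blast
  thus ?thesis
    by (intro that[OF nonneg_diag_mat_mult[OF S L]]) (simp_all add: Hmat_def assoc DV DU_eq_mat_diag)
qed

lemma Hmat_carrier_symmetric:
  assumes "0 < dx" "0 < dy" "0 < dz"
  shows "Hmat hbar m dx dy dz nx ny nz U \<in> carrier_mat (Nn nx ny nz) (Nn nx ny nz)"
    and "transpose_mat (Hmat hbar m dx dy dz nx ny nz U) = Hmat hbar m dx dy dz nx ny nz U"
proof -
  obtain B v where B: "nonneg_diag_mat (num_edges nx ny nz) B"
    and H: "Hmat hbar m dx dy dz nx ny nz U =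
      (hbar\<^sup>2 / (2*m)) \<cdot>\<^sub>m (Dmat nx ny nz * B * transpose_mat (Dmat nx ny nz))
      + mat_diag (Nn nx ny nz) (\<lambda>i. v i * node_potential U nx ny nz i)"
    and "\<And>i. dx*dy*dz/8 \<le> v i" "\<And>i. v i \<le> dx*dy*dz"
    using Hmat_split[OF assms, of nx ny nz hbar m U] by blast
  note DBD = congruence_nonneg_diag_mat[OF Dmat_carrier B]
  show "Hmat hbar m dx dy dz nx ny nz U \<in> carrier_mat (Nn nx ny nz) (Nn nx ny nz)"
    unfolding H by (intro add_carrier_mat smult_carrier_mat DBD(1) mat_diag_dim)
  show "transpose_mat (Hmat hbar m dx dy dz nx ny nz U) = Hmat hbar m dx dy dz nx ny nz U"
    unfolding H using DBD(1)
    by (simp add: transpose_add[of _ "Nn nx ny nz" "Nn nx ny nz"] transpose_smult_mat DBD(2))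
qed

lemma Hmat_quadratic_form_lower_bound:
  assumes "0 < m" "0 < dx" "0 < dy" "0 < dz" and x: "x \<in> carrier_vec (Nn nx ny nz)"
  shows "dx*dy*dz * potential_floor U nx ny nz * (x \<bullet> x) \<le> x \<bullet> (Hmat hbar m dx dy dz nx ny nz U *\<^sub>v x)"
proof -
  obtain B v where B: "nonneg_diag_mat (num_edges nx ny nz) B"
    and H: "Hmat hbar m dx dy dz nx ny nz U =
      (hbar\<^sup>2 / (2*m)) \<cdot>\<^sub>m (Dmat nx ny nz * B * transpose_mat (Dmat nx ny nz))
      + mat_diag (Nn nx ny nz) (\<lambda>i. v i * node_potential U nx ny nz i)"
    and v: "\<And>i. dx*dy*dz/8 \<le> v i" "\<And>i. v i \<le> dx*dy*dz"
    using Hmat_split[OF assms(2-4), of nx ny nz hbar m U] by blast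
  note DBD = congruence_nonneg_diag_mat[OF Dmat_carrier B]
  have floor: "potential_floor U nx ny nz \<le> 0" by (simp add: potential_floor_def)
  have "dx*dy*dz * potential_floor U nx ny nz \<le> v i * node_potential U nx ny nz i"
    if "i < Nn nx ny nz" for i
  proof -
    have "dx*dy*dz * potential_floor U nx ny nz \<le> v i * potential_floor U nx ny nz"
      using v(2)[of i] floor by (simp add: mult_right_mono_neg)
    also have "\<dots> \<le> v i * node_potential U nx ny nz i"
    proof (rule mult_left_mono)
      show "0 \<le> v i" using v(1)[of i] assms(2-4) by (smt (verit) divide_pos_pos mult_pos_pos)
    qed (rule potential_floor_le_node_potential[OF that])
    finally show ?thesis .
  qed
  hence "dx*dy*dz * potential_floor U nx ny nz * (x \<bullet> x)
      \<le> x \<bullet> (mat_diag (Nn nx ny nz) (\<lambda>i. v i * node_potential U nx ny nz i) *\<^sub>v x)"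
    by (rule mat_diag_quadratic_form_lower_bound[OF x])
  moreover have "0 \<le> (hbar\<^sup>2 / (2*m)) * (x \<bullet> ((Dmat nx ny nz * B * transpose_mat (Dmat nx ny nz)) *\<^sub>v x))"
    using DBD(3)[OF x] assms(1) by simp
  moreover have "x \<bullet> (Hmat hbar m dx dy dz nx ny nz U *\<^sub>v x)
      = (hbar\<^sup>2 / (2*m)) * (x \<bullet> ((Dmat nx ny nz * B * transpose_mat (Dmat nx ny nz)) *\<^sub>v x))
        + x \<bullet> (mat_diag (Nn nx ny nz) (\<lambda>i. v i * node_potential U nx ny nz i) *\<^sub>v x)"
    unfolding H by (rule quadratic_form_smult_add[OF DBD(1) mat_diag_dim x])
  ultimately show ?thesis by linarith
qed

text \<open>With \<open>S = V\<^sup>-\<^sup>1\<^sup>/\<^sup>2\<close>, the substitution \<open>u = S p\<close>, \<open>w = S q\<close> turns \<open>c (u \<bullet> H w)\<close> into \<open>p \<bullet> K q\<close> for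
  the symmetric matrix \<open>K = c S H S\<close>, whose norm is its spectral radius.\<close>
lemma bilinear_form_le_spectral_radius:
  fixes H :: "real mat" and v :: "nat \<Rightarrow> real" and n :: nat and c :: real
  defines "S \<equiv> diag_inv_sqrt (mat_diag n v)"
  defines "\<rho> \<equiv> spectral_radius (map_mat complex_of_real (c \<cdot>\<^sub>m (S * H * S)))"
  assumes H: "H \<in> carrier_mat n n" and sym: "transpose_mat H = H" and n: "0 < n"
    and v: "\<And>i. 0 < v i" and c: "0 < c" and \<rho>: "0 < \<rho>"
    and u: "u \<in> carrier_vec n" and w: "w \<in> carrier_vec n"
  shows "2 * c * \<bar>u \<bullet> (H *\<^sub>v w)\<bar> \<le> \<rho> * (u \<bullet> (mat_diag n v *\<^sub>v u) + w \<bullet> (mat_diag n v *\<^sub>v w))"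
proof -
  have S_eq: "S = mat_diag n (\<lambda>i. 1 / sqrt (v i))" by (simp add: S_def diag_inv_sqrt_mat_diag)
  have Sc: "S \<in> carrier_mat n n" and St: "transpose_mat S = S" by (simp_all add: S_eq)
  define K where "K = c \<cdot>\<^sub>m (S * H * S)"
  have Kc: "K \<in> carrier_mat n n" using Sc H by (simp add: K_def)
  have "transpose_mat (S * H * S) = transpose_mat S * transpose_mat (S * H)"
    by (rule transpose_mult) (use Sc H in auto)
  also have "transpose_mat (S * H) = transpose_mat H * transpose_mat S"
    by (rule transpose_mult) (use Sc H in auto)
  finally have Kt: "transpose_mat K = K"
    using Sc H by (simp add: K_def transpose_smult_mat St sym assoc_mult_mat[of S n n H n S n])
  define p where "p = vec n (\<lambda>i. sqrt (v i) * u $ i)"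
  define q where "q = vec n (\<lambda>i. sqrt (v i) * w $ i)"
  have pc: "p \<in> carrier_vec n" and qc: "q \<in> carrier_vec n" by (simp_all add: p_def q_def)
  have "v i \<noteq> 0" for i using v[of i] by simp
  hence Sp: "S *\<^sub>v p = u" and Sq: "S *\<^sub>v q = w"
    using u w by (auto simp: S_eq mat_diag_mult_vec p_def q_def intro!: eq_vecI)
  have sq: "(sqrt (v i) * a)\<^sup>2 = v i * a * a" for i a
    using v[of i] by (simp add: power_mult_distrib power2_eq_square[of a] less_imp_le)
  have pp: "p \<bullet> p = u \<bullet> (mat_diag n v *\<^sub>v u)" and qq: "q \<bullet> q = w \<bullet> (mat_diag n v *\<^sub>v w)"
    unfolding scalar_prod_self_eq_sum_sq[OF pc] scalar_prod_self_eq_sum_sq[OF qc]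
      scalar_prod_mat_diag[OF u u] scalar_prod_mat_diag[OF w w]
    by (simp_all add: p_def q_def sq)
  have "(S * H * S) *\<^sub>v q = (S * H) *\<^sub>v (S *\<^sub>v q)"
    by (rule assoc_mult_mat_vec) (use Sc H qc in auto)
  also have "\<dots> = S *\<^sub>v (H *\<^sub>v w)"
    unfolding Sq by (rule assoc_mult_mat_vec) (use Sc H w in auto)
  finally have "K *\<^sub>v q = c \<cdot>\<^sub>v (S *\<^sub>v (H *\<^sub>v w))"
    using Sc H qc by (simp add: K_def smult_mat_mult_vec)
  hence "p \<bullet> (K *\<^sub>v q) = c * (u \<bullet> (H *\<^sub>v w))"
    using Sc H pc w St symmetric_scalar_prod_swap[OF Sc St pc, of "H *\<^sub>v w"]
    by (simp add: Sp comm_scalar_prod[OF mult_mat_vec_carrier[OF H w] u])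
  moreover have "2 * \<bar>p \<bullet> (K *\<^sub>v q)\<bar> \<le> \<rho> * (p \<bullet> p) + (K *\<^sub>v q) \<bullet> (K *\<^sub>v q) / \<rho>"
    by (rule scalar_prod_abs_le_weighted[OF pc _ \<rho>]) (use Kc qc in simp)
  moreover have "(K *\<^sub>v q) \<bullet> (K *\<^sub>v q) / \<rho> \<le> \<rho> * (q \<bullet> q)"
    using symmetric_mat_norm_le_spectral_radius[OF Kc n Kt qc] \<rho>
    by (simp add: \<rho>_def K_def divide_le_eq power2_eq_square ac_simps)
  ultimately show ?thesis using c pp qq by (simp add: abs_mult distrib_left)
qed

lemma DV_carrier_symmetric:
  assumes "0 < dx" "0 < dy" "0 < dz"
  shows "DV dx dy dz nx ny nz \<in> carrier_mat (Nn nx ny nz) (Nn nx ny nz)"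
    and "transpose_mat (DV dx dy dz nx ny nz) = DV dx dy dz nx ny nz"
  by (metis DV_eq_mat_diag[OF assms] mat_diag_dim transpose_mat_diag)+

lemma Pmat_carrier_symmetric:
  assumes "0 < dx" "0 < dy" "0 < dz"
  shows "Pmat hbar m dt dx dy dz nx ny nz U
           \<in> carrier_mat (Nn nx ny nz + Nn nx ny nz) (Nn nx ny nz + Nn nx ny nz)"
    and "transpose_mat (Pmat hbar m dt dx dy dz nx ny nz U) = Pmat hbar m dt dx dy dz nx ny nz U"
proof -
  let ?V = "DV dx dy dz nx ny nz" and ?K = "(- dt / (2*hbar)) \<cdot>\<^sub>m Hmat hbar m dx dy dz nx ny nz U"
  have V: "?V \<in> carrier_mat (Nn nx ny nz) (Nn nx ny nz)" "transpose_mat ?V = ?V"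
    using DV_carrier_symmetric[OF assms] by simp_all
  have K: "?K \<in> carrier_mat (Nn nx ny nz) (Nn nx ny nz)" "transpose_mat ?K = ?K"
    using Hmat_carrier_symmetric[OF assms] by (simp_all add: transpose_smult_mat)
  show "Pmat hbar m dt dx dy dz nx ny nz U
      \<in> carrier_mat (Nn nx ny nz + Nn nx ny nz) (Nn nx ny nz + Nn nx ny nz)"
    using V K by (simp add: Pmat_def Let_def)
  show "transpose_mat (Pmat hbar m dt dx dy dz nx ny nz U) = Pmat hbar m dt dx dy dz nx ny nz U"
    unfolding Pmat_def Let_def transpose_four_block_mat[OF V(1) K(1) K(1) V(1)] V(2) K(2) ..
qed

lemma four_block_mat_coercive:
  fixes K :: "real mat" and v :: "nat \<Rightarrow> real"
  assumes K: "K \<in> carrier_mat n n" "transpose_mat K = K"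
    and v: "\<And>i. a \<le> v i" and \<theta>: "\<theta> \<le> 1"
    and cross: "\<And>u w. u \<in> carrier_vec n \<Longrightarrow> w \<in> carrier_vec n \<Longrightarrow>
      2 * \<bar>u \<bullet> (K *\<^sub>v w)\<bar> \<le> \<theta> * (u \<bullet> (mat_diag n v *\<^sub>v u) + w \<bullet> (mat_diag n v *\<^sub>v w))"
    and z: "z \<in> carrier_vec (n + n)"
  shows "(1 - \<theta>) * a * (z \<bullet> z) \<le> z \<bullet> (four_block_mat (mat_diag n v) K K (mat_diag n v) *\<^sub>v z)"
proof -
  define u where "u = vec_first z n"
  define w where "w = vec_last z n"
  have uc: "u \<in> carrier_vec n" and wc: "w \<in> carrier_vec n" by (simp_all add: u_def w_def)
  have zuw: "z = u @\<^sub>v w" unfolding u_def w_def using z by simp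
  let ?Q = "u \<bullet> (mat_diag n v *\<^sub>v u) + w \<bullet> (mat_diag n v *\<^sub>v w)"
  have "a * (u \<bullet> u) \<le> u \<bullet> (mat_diag n v *\<^sub>v u)" "a * (w \<bullet> w) \<le> w \<bullet> (mat_diag n v *\<^sub>v w)"
    using mat_diag_quadratic_form_lower_bound[OF uc] mat_diag_quadratic_form_lower_bound[OF wc] v
    by blast+
  moreover have "z \<bullet> z = u \<bullet> u + w \<bullet> w" unfolding zuw by (rule scalar_prod_append[OF uc wc uc wc])
  ultimately have "a * (z \<bullet> z) \<le> ?Q" by (simp add: distrib_left)
  hence "(1 - \<theta>) * (a * (z \<bullet> z)) \<le> (1 - \<theta>) * ?Q" using \<theta> by (intro mult_left_mono) auto
  also have "\<dots> \<le> ?Q + 2 * (u \<bullet> (K *\<^sub>v w))" using cross[OF uc wc] by (simp add: algebra_simps)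
  also have "\<dots> = z \<bullet> (four_block_mat (mat_diag n v) K K (mat_diag n v) *\<^sub>v z)"
    unfolding zuw by (rule quadratic_form_four_block_mat[OF mat_diag_dim K uc wc, symmetric])
  finally show ?thesis by (simp only: mult.assoc)
qed

lemma time_step_below_cfl_limit:
  fixes dt \<rho> :: real
  assumes "0 < dt" and "dt < 2 / \<rho>"
  shows "0 < \<rho>" and "dt * \<rho> < 2"
proof -
  show "0 < \<rho>"
  proof (rule ccontr)
    assume "\<not> 0 < \<rho>"
    hence "2 / \<rho> \<le> 0" by (simp add: divide_nonneg_nonpos)
    thus False using assms by linarith
  qed
  thus "dt * \<rho> < 2" using assms(2) by (simp add: less_divide_eq)
qed

lemma Pmat_coercive:
  assumes hbar: "0 < hbar" and pos: "0 < dx" "0 < dy" "0 < dz"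
    and dt: "0 < dt" and cfl: "dt < dt_CFL hbar m dx dy dz nx ny nz U"
  shows "\<exists>c0 > 0. \<forall>z \<in> carrier_vec (Nn nx ny nz + Nn nx ny nz).
           c0 * (z \<bullet> z) \<le> z \<bullet> (Pmat hbar m dt dx dy dz nx ny nz U *\<^sub>v z)"
proof -
  define N where "N = Nn nx ny nz"
  have N: "0 < N" by (simp add: N_def Nn_def)
  define H where "H = Hmat hbar m dx dy dz nx ny nz U"
  have Hc: "H \<in> carrier_mat N N" and Ht: "transpose_mat H = H"
    using Hmat_carrier_symmetric[OF pos] by (simp_all add: H_def N_def)
  obtain v where DV: "DV dx dy dz nx ny nz = mat_diag N v" and v: "\<And>i. dx*dy*dz/8 \<le> v i"
    using DV_eq_mat_diag[OF pos] unfolding N_def by blast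
  have vpos: "0 < v i" for i using v[of i] pos by (smt (verit) divide_pos_pos mult_pos_pos)
  define \<rho> where "\<rho> = spectral_radius (map_mat complex_of_real
      ((1/hbar) \<cdot>\<^sub>m (diag_inv_sqrt (mat_diag N v) * H * diag_inv_sqrt (mat_diag N v))))"
  have cfl': "dt_CFL hbar m dx dy dz nx ny nz U = 2 / \<rho>"
    by (simp add: dt_CFL_def \<rho>_def DV H_def Let_def)
  have \<rho>: "0 < \<rho>" and dt\<rho>: "dt * \<rho> < 2"
    using time_step_below_cfl_limit[OF dt cfl[unfolded cfl']] by simp_all
  define K where "K = (- dt / (2*hbar)) \<cdot>\<^sub>m H"
  have K: "K \<in> carrier_mat N N" "transpose_mat K = K"
    using Hc Ht by (simp_all add: K_def transpose_smult_mat)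
  have "2 * \<bar>u \<bullet> (K *\<^sub>v w)\<bar> \<le> (dt * \<rho> / 2) * (u \<bullet> (mat_diag N v *\<^sub>v u) + w \<bullet> (mat_diag N v *\<^sub>v w))"
    if uc: "u \<in> carrier_vec N" and wc: "w \<in> carrier_vec N" for u w
  proof -
    have "2 * (1/hbar) * \<bar>u \<bullet> (H *\<^sub>v w)\<bar> \<le> \<rho> * (u \<bullet> (mat_diag N v *\<^sub>v u) + w \<bullet> (mat_diag N v *\<^sub>v w))"
      unfolding \<rho>_def by (rule bilinear_form_le_spectral_radius[OF Hc Ht N vpos _ _ uc wc])
        (use hbar \<rho> in \<open>simp_all add: \<rho>_def\<close>)
    hence "(dt / 2) * (2 * (1/hbar) * \<bar>u \<bullet> (H *\<^sub>v w)\<bar>)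
        \<le> (dt / 2) * (\<rho> * (u \<bullet> (mat_diag N v *\<^sub>v u) + w \<bullet> (mat_diag N v *\<^sub>v w)))"
      using dt by (intro mult_left_mono) auto
    moreover have "2 * \<bar>u \<bullet> (K *\<^sub>v w)\<bar> = (dt / 2) * (2 * (1/hbar) * \<bar>u \<bullet> (H *\<^sub>v w)\<bar>)"
      using Hc wc uc dt hbar
      by (simp add: K_def smult_mat_mult_vec carrier_matD[OF Hc] carrier_vecD[OF wc] abs_mult)
    ultimately show ?thesis by (simp add: ac_simps)
  qed
  hence "(1 - dt * \<rho> / 2) * (dx*dy*dz/8) * (z \<bullet> z) \<le> z \<bullet> (Pmat hbar m dt dx dy dz nx ny nz U *\<^sub>v z)"
    if "z \<in> carrier_vec (N + N)" for z
    unfolding Pmat_def Let_def DV H_def[symmetric] K_def[symmetric]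
    using four_block_mat_coercive[OF K v _ _ that] dt\<rho> by simp
  moreover have "0 < (1 - dt * \<rho> / 2) * (dx*dy*dz/8)" using dt\<rho> pos by simp
  ultimately show ?thesis unfolding N_def by blast
qed

section \<open>Discrete energy\<close>

definition discrete_energy ::
  "real mat \<Rightarrow> real mat \<Rightarrow> real \<Rightarrow> real vec \<Rightarrow> real vec \<Rightarrow> real vec \<Rightarrow> real vec \<Rightarrow> real" where
  "discrete_energy H W dt r0 r1 i1 i2 =
     r1 \<bullet> (H *\<^sub>v r1) + i1 \<bullet> (H *\<^sub>v i1)
     + dt * (((1/dt) \<cdot>\<^sub>v (r1 - r0)) \<bullet> (W *\<^sub>v ((1/dt) \<cdot>\<^sub>v (i2 - i1))))"

lemma discrete_energy_eq:
  assumes "W \<in> carrier_mat n n" "r0 \<in> carrier_vec n" "r1 \<in> carrier_vec n"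
    "i1 \<in> carrier_vec n" "i2 \<in> carrier_vec n"
  shows "discrete_energy H W dt r0 r1 i1 i2
    = r1 \<bullet> (H *\<^sub>v r1) + i1 \<bullet> (H *\<^sub>v i1) + (1/dt) * ((r1 - r0) \<bullet> (W *\<^sub>v (i2 - i1)))"
  using assms by (simp add: discrete_energy_def mult_mat_vec[of W n n] power2_eq_square)

lemma discrete_energy_balance:
  fixes H W G :: "real mat"
  assumes H: "H \<in> carrier_mat n n" "transpose_mat H = H"
    and W: "W \<in> carrier_mat n n" "transpose_mat W = W"
    and G: "dim_row G = n"
    and r: "r0 \<in> carrier_vec n" "r1 \<in> carrier_vec n" "r2 \<in> carrier_vec n"
    and i: "i1 \<in> carrier_vec n" "i2 \<in> carrier_vec n" "i3 \<in> carrier_vec n"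
    and g: "dim_vec gR1 = dim_vec gR2" "dim_vec gI0 = dim_vec gI1"
    and dt: "dt \<noteq> 0"
    and ea: "W *\<^sub>v ((1/dt) \<cdot>\<^sub>v (r1 - r0)) = H *\<^sub>v i1 - G *\<^sub>v gI0"
    and eb: "W *\<^sub>v ((1/dt) \<cdot>\<^sub>v (r2 - r1)) = H *\<^sub>v i2 - G *\<^sub>v gI1"
    and ec: "W *\<^sub>v ((1/dt) \<cdot>\<^sub>v (i2 - i1)) = - (H *\<^sub>v r1) + G *\<^sub>v gR1"
    and ed: "W *\<^sub>v ((1/dt) \<cdot>\<^sub>v (i3 - i2)) = - (H *\<^sub>v r2) + G *\<^sub>v gR2"
  shows "(discrete_energy H W dt r1 r2 i2 i3 - discrete_energy H W dt r0 r1 i1 i2) / dt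
    = 2 * (((1/dt) \<cdot>\<^sub>v (r2 - r1)) \<bullet> (G *\<^sub>v ((1/2) \<cdot>\<^sub>v (gR2 + gR1))))
    + 2 * (((1/dt) \<cdot>\<^sub>v (i2 - i1)) \<bullet> (G *\<^sub>v ((1/2) \<cdot>\<^sub>v (gI1 + gI0))))"
proof -
  define a1 where "a1 = r1 - r0"
  define a2 where "a2 = r2 - r1"
  define b1 where "b1 = i2 - i1"
  define b2 where "b2 = i3 - i2"
  have ab: "a1 \<in> carrier_vec n" "a2 \<in> carrier_vec n" "b1 \<in> carrier_vec n" "b2 \<in> carrier_vec n"
    using r i by (simp_all add: a1_def a2_def b1_def b2_def)
  have vecs: "H *\<^sub>v x \<in> carrier_vec n" "G *\<^sub>v x \<in> carrier_vec n" "W *\<^sub>v x \<in> carrier_vec n" for x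
    using H W G by (simp_all add: mult_mat_vec_carrier_row)
  have Wdt: "y \<bullet> (W *\<^sub>v ((1/dt) \<cdot>\<^sub>v x)) = (1/dt) * (y \<bullet> (W *\<^sub>v x))"
    if "x \<in> carrier_vec n" "y \<in> carrier_vec n" for x y
    using W that vecs by (simp add: mult_mat_vec[of W n n] scalar_prod_smult_distrib[of y n])
  have F1: "(1/dt) * (a2 \<bullet> (W *\<^sub>v b2)) = - (a2 \<bullet> (H *\<^sub>v r2)) + a2 \<bullet> (G *\<^sub>v gR2)"
    using arg_cong[OF ed, of "(\<bullet>) a2"] ab vecs
    by (simp add: Wdt b2_def[symmetric] scalar_prod_add_distrib[of _ n] carrier_vecD[OF ab(2)]
        carrier_matD[OF H(1)])
  have F2: "(1/dt) * (a2 \<bullet> (W *\<^sub>v b1)) = - (a2 \<bullet> (H *\<^sub>v r1)) + a2 \<bullet> (G *\<^sub>v gR1)"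
    using arg_cong[OF ec, of "(\<bullet>) a2"] ab vecs
    by (simp add: Wdt b1_def[symmetric] scalar_prod_add_distrib[of _ n] carrier_vecD[OF ab(2)]
        carrier_matD[OF H(1)])
  have F3: "(1/dt) * (b1 \<bullet> (W *\<^sub>v a2)) = b1 \<bullet> (H *\<^sub>v i2) - b1 \<bullet> (G *\<^sub>v gI1)"
    using arg_cong[OF eb, of "(\<bullet>) b1"] ab vecs
    by (simp add: Wdt a2_def[symmetric] scalar_prod_minus_distrib[of _ n])
  have F4: "(1/dt) * (b1 \<bullet> (W *\<^sub>v a1)) = b1 \<bullet> (H *\<^sub>v i1) - b1 \<bullet> (G *\<^sub>v gI0)"
    using arg_cong[OF ea, of "(\<bullet>) b1"] ab vecs
    by (simp add: Wdt a1_def[symmetric] scalar_prod_minus_distrib[of _ n])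
  have "a2 \<bullet> (W *\<^sub>v b1) = b1 \<bullet> (W *\<^sub>v a2)" "a1 \<bullet> (W *\<^sub>v b1) = b1 \<bullet> (W *\<^sub>v a1)"
    using symmetric_scalar_prod_swap[OF W] ab by blast+
  moreover have "a2 \<bullet> (H *\<^sub>v r2) + a2 \<bullet> (H *\<^sub>v r1) = r2 \<bullet> (H *\<^sub>v r2) - r1 \<bullet> (H *\<^sub>v r1)"
    "b1 \<bullet> (H *\<^sub>v i2) + b1 \<bullet> (H *\<^sub>v i1) = i2 \<bullet> (H *\<^sub>v i2) - i1 \<bullet> (H *\<^sub>v i1)"
    unfolding a2_def b1_def using symmetric_quadratic_form_diff[OF H] r i by blast+
  ultimately have "discrete_energy H W dt r1 r2 i2 i3 - discrete_energy H W dt r0 r1 i1 i2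
      = a2 \<bullet> (G *\<^sub>v gR2) + a2 \<bullet> (G *\<^sub>v gR1) + b1 \<bullet> (G *\<^sub>v gI1) + b1 \<bullet> (G *\<^sub>v gI0)"
    using F1 F2 F3 F4 r i W(1)
    by (simp add: discrete_energy_eq a1_def[symmetric] a2_def[symmetric] b1_def[symmetric]
        b2_def[symmetric])
  thus ?thesis
    using ab vecs g dt by (simp add: mult_mat_vec_smult_add a2_def[symmetric] b1_def[symmetric]
        scalar_prod_add_distrib[of _ n] field_simps)
qed

lemma discrete_energy_lower_bound:
  fixes H :: "real mat" and v :: "nat \<Rightarrow> real"
  assumes H: "H \<in> carrier_mat n n" and Hq: "\<And>x. x \<in> carrier_vec n \<Longrightarrow> a * (x \<bullet> x) \<le> x \<bullet> (H *\<^sub>v x)"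
    and a: "a \<le> 0" and v: "\<And>i. 0 \<le> v i" "\<And>i. v i \<le> c" and hbar: "0 < hbar" and dt: "0 < dt"
    and vecs: "r0 \<in> carrier_vec n" "r1 \<in> carrier_vec n" "i1 \<in> carrier_vec n" "i2 \<in> carrier_vec n"
    and bounds: "r1 \<bullet> r1 + i1 \<bullet> i1 \<le> M" "r0 \<bullet> r0 \<le> M" "i2 \<bullet> i2 \<le> M"
  shows "a * M - 4 * (hbar / dt) * c * M \<le> discrete_energy H (hbar \<cdot>\<^sub>m mat_diag n v) dt r0 r1 i1 i2"
proof -
  let ?X = "(r1 - r0) \<bullet> (mat_diag n v *\<^sub>v (i2 - i1))"
  have M: "0 \<le> M" using bounds(2) scalar_prod_self_nonneg[of r0] by linarith
  have c: "0 \<le> c" using v[of 0] by linarith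
  have "2 * \<bar>?X\<bar> \<le> c * ((r1 - r0) \<bullet> (r1 - r0) + (i2 - i1) \<bullet> (i2 - i1))"
    by (rule mat_diag_bilinear_abs_bound) (use vecs v in auto)
  also have "\<dots> \<le> c * (2 * (r1 \<bullet> r1 + r0 \<bullet> r0) + 2 * (i2 \<bullet> i2 + i1 \<bullet> i1))"
    using scalar_prod_self_diff_le vecs c by (intro mult_left_mono add_mono) auto
  also have "\<dots> \<le> c * (8 * M)"
    using bounds M c by (intro mult_left_mono) auto
  finally have X: "- (4 * c * M) \<le> ?X" by linarith
  have "a * M \<le> a * (r1 \<bullet> r1 + i1 \<bullet> i1)" using bounds(1) a by (rule mult_left_mono_neg)
  also have "\<dots> \<le> r1 \<bullet> (H *\<^sub>v r1) + i1 \<bullet> (H *\<^sub>v i1)"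
    using Hq vecs by (simp add: distrib_left add_mono)
  moreover have "- (hbar / dt) * (4 * c * M) \<le> (hbar / dt) * ?X"
    using mult_left_mono[OF X, of "hbar / dt"] hbar dt by simp
  moreover have "(hbar \<cdot>\<^sub>m mat_diag n v) *\<^sub>v (i2 - i1) = hbar \<cdot>\<^sub>v (mat_diag n v *\<^sub>v (i2 - i1))"
    by (rule smult_mat_mult_vec) (use vecs in \<open>simp add: mat_diag_def\<close>)
  hence "discrete_energy H (hbar \<cdot>\<^sub>m mat_diag n v) dt r0 r1 i1 i2
      = r1 \<bullet> (H *\<^sub>v r1) + i1 \<bullet> (H *\<^sub>v i1) + (hbar / dt) * ?X"
    using vecs mult_mat_vec_carrier[OF mat_diag_dim, of "i2 - i1" n v]
    by (simp add: discrete_energy_eq[of _ n] scalar_prod_smult_distrib[of _ n])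
  ultimately show ?thesis by (simp add: algebra_simps)
qed

lemma Hperp_dim_row: "dim_row (Hperp hbar m dx dy dz nx ny nz) = Nn nx ny nz"
  by (simp add: Hperp_def Lmat_def hcat_def kron_def Im_def evec_def Nn_def)

lemma total_energy_eq_discrete_energy:
  "total_energy hbar m dt dx dy dz nx ny nz U psiR psiI n =
     discrete_energy (Hmat hbar m dx dy dz nx ny nz U) (hbar \<cdot>\<^sub>m DV dx dy dz nx ny nz) dt
       (psiR (n - 1)) (psiR n) (psiI n) (psiI (Suc n))"
  by (simp add: total_energy_def discrete_energy_def Let_def)

lemma fdtdq_energy_balance:
  assumes pos: "0 < dx" "0 < dy" "0 < dz" and dt: "0 < dt"
    and scheme: "fdtdq_scheme hbar m dt dx dy dz nx ny nz nt U psiR psiI gR gI"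
    and n: "1 \<le> n" "n \<le> nt - 2"
  shows "(total_energy hbar m dt dx dy dz nx ny nz U psiR psiI (Suc n)
          - total_energy hbar m dt dx dy dz nx ny nz U psiR psiI n) / dt
       = supplied_power hbar m dt dx dy dz nx ny nz psiR psiI gR gI n"
proof -
  obtain k where k: "n = Suc k" using n by (cases n) auto
  have k3: "Suc (Suc k) < nt" using n k by auto
  let ?N = "Nn nx ny nz" and ?M = "Mm nx ny nz"
  let ?H = "Hmat hbar m dx dy dz nx ny nz U" and ?V = "DV dx dy dz nx ny nz"
    and ?G = "Hperp hbar m dx dy dz nx ny nz"
  have vecs: "\<And>j. j \<le> nt \<Longrightarrow> psiR j \<in> carrier_vec ?N \<and> psiI j \<in> carrier_vec ?N"
    and bvecs: "\<And>j. j < nt \<Longrightarrow> gR j \<in> carrier_vec ?M \<and> gI j \<in> carrier_vec ?M"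
    and eqs: "\<And>j. j < nt \<Longrightarrow>
       hbar \<cdot>\<^sub>m ?V *\<^sub>v ((1/dt) \<cdot>\<^sub>v (psiR (Suc j) - psiR j)) = ?H *\<^sub>v psiI (Suc j) - ?G *\<^sub>v gI j \<and>
       hbar \<cdot>\<^sub>m ?V *\<^sub>v ((1/dt) \<cdot>\<^sub>v (psiI (Suc j) - psiI j)) = - (?H *\<^sub>v psiR j) + ?G *\<^sub>v gR j"
    using scheme by (simp_all add: fdtdq_scheme_def Let_def)
  have g: "dim_vec (gR (Suc k)) = dim_vec (gR (Suc (Suc k)))" "dim_vec (gI k) = dim_vec (gI (Suc k))"
    using bvecs k3 by (metis Suc_lessD carrier_vecD)+
  have W: "hbar \<cdot>\<^sub>m ?V \<in> carrier_mat ?N ?N" "transpose_mat (hbar \<cdot>\<^sub>m ?V) = hbar \<cdot>\<^sub>m ?V"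
    using DV_carrier_symmetric[OF pos] by (simp_all add: transpose_smult_mat)
  have "(discrete_energy ?H (hbar \<cdot>\<^sub>m ?V) dt (psiR (Suc k)) (psiR (Suc (Suc k)))
           (psiI (Suc (Suc k))) (psiI (Suc (Suc (Suc k))))
        - discrete_energy ?H (hbar \<cdot>\<^sub>m ?V) dt (psiR k) (psiR (Suc k)) (psiI (Suc k)) (psiI (Suc (Suc k))))
        / dt
      = supplied_power hbar m dt dx dy dz nx ny nz psiR psiI gR gI n"
    unfolding supplied_power_def Let_def k diff_Suc_1
    by (rule discrete_energy_balance[OF Hmat_carrier_symmetric[OF pos] W Hperp_dim_row
          _ _ _ _ _ _ g]) (use vecs eqs k3 dt in auto)
  thus ?thesis by (simp add: total_energy_eq_discrete_energy k)
qed

lemma fdtdq_energy_lower_bound: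
  assumes hbar: "0 < hbar" and m: "0 < m" and pos: "0 < dx" "0 < dy" "0 < dz" and dt: "0 < dt"
    and scheme: "fdtdq_scheme hbar m dt dx dy dz nx ny nz nt U psiR psiI gR gI"
    and n: "1 \<le> n" "n \<le> nt - 1"
    and bound: "\<And>j. j \<le> nt \<Longrightarrow> psiR j \<bullet> psiR j + psiI j \<bullet> psiI j \<le> M"
  shows "dx*dy*dz * M * (potential_floor U nx ny nz - 4*hbar/dt)
       \<le> total_energy hbar m dt dx dy dz nx ny nz U psiR psiI n"
proof -
  obtain k where k: "n = Suc k" using n by (cases n) auto
  have k2: "Suc (Suc k) \<le> nt" using n k by auto
  have vecs: "\<And>j. j \<le> nt \<Longrightarrow> psiR j \<in> carrier_vec (Nn nx ny nz) \<and> psiI j \<in> carrier_vec (Nn nx ny nz)"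
    using scheme by (simp add: fdtdq_scheme_def Let_def)
  obtain v where DV: "DV dx dy dz nx ny nz = mat_diag (Nn nx ny nz) v"
    and v: "\<And>i. dx*dy*dz/8 \<le> v i" "\<And>i. v i \<le> dx*dy*dz"
    using DV_eq_mat_diag[OF pos] by blast
  have v0: "0 \<le> v i" for i using v(1)[of i] pos by (smt (verit) divide_pos_pos mult_pos_pos)
  have a: "dx*dy*dz * potential_floor U nx ny nz \<le> 0"
    using pos by (simp add: potential_floor_def mult_nonneg_nonpos)
  have "psiR k \<bullet> psiR k \<le> M" "psiI (Suc (Suc k)) \<bullet> psiI (Suc (Suc k)) \<le> M"
    using bound[of k] bound[of "Suc (Suc k)"] k2 scalar_prod_self_nonneg by (smt (verit) Suc_leD)+
  hence "dx*dy*dz * potential_floor U nx ny nz * M - 4 * (hbar/dt) * (dx*dy*dz) * M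
      \<le> discrete_energy (Hmat hbar m dx dy dz nx ny nz U) (hbar \<cdot>\<^sub>m mat_diag (Nn nx ny nz) v) dt
           (psiR k) (psiR (Suc k)) (psiI (Suc k)) (psiI (Suc (Suc k)))"
    using vecs k2 bound[of "Suc k"]
    by (intro discrete_energy_lower_bound[OF Hmat_carrier_symmetric(1)[OF pos]
          Hmat_quadratic_form_lower_bound[OF m pos] a v0 v(2) hbar dt]) auto
  thus ?thesis by (simp add: total_energy_eq_discrete_energy k DV algebra_simps)
qed

lemma total_prob_lower_bound:
  assumes pos: "0 < dx" "0 < dy" "0 < dz"
    and vecs: "psiR j \<in> carrier_vec (Nn nx ny nz)" "psiI j \<in> carrier_vec (Nn nx ny nz)"
  shows "lambda_min (Pmat hbar m dt dx dy dz nx ny nz U) * (psiR j \<bullet> psiR j + psiI j \<bullet> psiI j)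
       \<le> total_prob hbar m dt dx dy dz nx ny nz U psiR psiI j"
proof -
  have "0 < Nn nx ny nz + Nn nx ny nz" by (simp add: Nn_def)
  moreover have "psiR j @\<^sub>v psiI j \<in> carrier_vec (Nn nx ny nz + Nn nx ny nz)" using vecs by simp
  ultimately have "lambda_min (Pmat hbar m dt dx dy dz nx ny nz U) * ((psiR j @\<^sub>v psiI j) \<bullet> (psiR j @\<^sub>v psiI j))
      \<le> (psiR j @\<^sub>v psiI j) \<bullet> (Pmat hbar m dt dx dy dz nx ny nz U *\<^sub>v (psiR j @\<^sub>v psiI j))"
    by (rule lambda_min_symmetric_mat(2)[OF Pmat_carrier_symmetric(1)[OF pos] _
          Pmat_carrier_symmetric(2)[OF pos]])
  thus ?thesis by (simp add: total_prob_def Let_def scalar_prod_append[OF vecs vecs])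
qed

lemma lambda_min_Pmat_pos:
  assumes "0 < hbar" "0 < dx" "0 < dy" "0 < dz"
    and "0 < dt" "dt < dt_CFL hbar m dx dy dz nx ny nz U"
  shows "0 < lambda_min (Pmat hbar m dt dx dy dz nx ny nz U)"
proof -
  obtain c0 where "0 < c0" and "\<forall>z \<in> carrier_vec (Nn nx ny nz + Nn nx ny nz).
      c0 * (z \<bullet> z) \<le> z \<bullet> (Pmat hbar m dt dx dy dz nx ny nz U *\<^sub>v z)"
    using Pmat_coercive[OF assms] by blast
  moreover have "c0 \<le> lambda_min (Pmat hbar m dt dx dy dz nx ny nz U)"
    by (rule lambda_min_ge[OF Pmat_carrier_symmetric(1)[OF assms(2-4)] _
          Pmat_carrier_symmetric(2)[OF assms(2-4)]]) (use calculation in \<open>auto simp: Nn_def\<close>)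
  ultimately show ?thesis by linarith
qed

theorem theorem3:
  fixes hbar m dx dy dz dt Pmax :: real
    and nx ny nz nt :: nat
    and U :: "nat \<Rightarrow> nat \<Rightarrow> nat \<Rightarrow> real"
    and psiR psiI gR gI :: "nat \<Rightarrow> real vec"
  assumes "hbar > 0" "m > 0" "dx > 0" "dy > 0" "dz > 0"
    and "nx > 0" "ny > 0" "nz > 0" "nt > 0"
    and "dt > 0" "dt < dt_CFL hbar m dx dy dz nx ny nz U"
    and "fdtdq_scheme hbar m dt dx dy dz nx ny nz nt U psiR psiI gR gI"
    and "\<forall>n\<le>nt. total_prob hbar m dt dx dy dz nx ny nz U psiR psiI n \<le> Pmax"
  shows "(\<forall>n. 1 \<le> n \<and> n \<le> nt - 1 \<longrightarrow>
            total_energy hbar m dt dx dy dz nx ny nz U psiR psiI n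
            \<ge> dx*dy*dz * (Pmax / lambda_min (Pmat hbar m dt dx dy dz nx ny nz U))
               * (min (Min {U i j k | i j k. i \<in> {1..nx+1} \<and> j \<in> {1..ny+1} \<and> k \<in> {1..nz+1}}) 0
                  - 4*hbar/dt))
       \<and> (\<forall>n. 1 \<le> n \<and> n \<le> nt - 2 \<longrightarrow>
            (total_energy hbar m dt dx dy dz nx ny nz U psiR psiI (Suc n)
             - total_energy hbar m dt dx dy dz nx ny nz U psiR psiI n) / dt
            = supplied_power hbar m dt dx dy dz nx ny nz psiR psiI gR gI n)"
proof -
  let ?l = "lambda_min (Pmat hbar m dt dx dy dz nx ny nz U)"
  have l: "0 < ?l" using lambda_min_Pmat_pos assms(1,3-5,10,11) by blast
  have "psiR j \<bullet> psiR j + psiI j \<bullet> psiI j \<le> Pmax / ?l" if "j \<le> nt" for j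
  proof -
    have "psiR j \<in> carrier_vec (Nn nx ny nz)" "psiI j \<in> carrier_vec (Nn nx ny nz)"
      using assms(12) that by (simp_all add: fdtdq_scheme_def Let_def)
    hence "?l * (psiR j \<bullet> psiR j + psiI j \<bullet> psiI j) \<le> Pmax"
      using total_prob_lower_bound[OF assms(3-5)] assms(13) that by (meson order_trans)
    thus ?thesis using l by (simp add: le_divide_eq mult.commute)
  qed
  from fdtdq_energy_lower_bound[OF assms(1-5,10,12) _ _ this] fdtdq_energy_balance[OF assms(3-5,10,12)]
  show ?thesis by (auto simp: potential_floor_def)
qed

end
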